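(* Let $(X,U)$ and $(Y,V)$ be coarse ideal pairs and let $f:X\to Y$ be a coarse equivalence between them. Then there exists an isometry $W_f:\mathcal H_X\to\mathcal H_Y$ covering $f$ such that $\operatorname{Ad}_{W_f}(T)=W_fTW_f^*$ maps $\mathcal I(X,U)$ into $\mathcal I(Y,V)$ and $\mathcal G(X,U)$ into $\mathcal G(Y,V)$. Moreover, $W_f$ can be chosen to be a unitary.
   Context: Metric spaces are discrete with bounded geometry. For such $X$: $\beta X$ is the Stone–Čech compactification; the coarse groupoid $G(X)=\bigcup_{R\ge0}\overline{\{(x,y):d(x,y)\le R\}}\subseteq\beta(X\times X)$ has range/source maps $r,s:G(X)\to\beta X$ extending the coordinate projections; $U\subseteq\beta X$ is invariant if $r(\gamma)\in U\iff s(\gamma)\in U$ for all $\gamma\in G(X)$. A coarse ideal pair $(X,U)$ is a space $X$ with an invariant open $U\subseteq\beta X$. A coarse equivalence $f:X\to Y$ (extended continuously to $\beta X\to\beta Y$) is a coarse equivalence between $(X,U)$ and $(Y,V)$ if $V$ is the smallest invariant open subset of $\beta Y$ containing $f(U)$. Fix a separable infinite-dimensional Hilbert space $\mathcal H$ and $\mathcal H_X=\ell^2(X)\otimes\mathcal H$; operators are matrices with entries $T_{xy}\in\mathcal B(\mathcal H)$. $\mathbb C[X]$: finite-propagation operators with compact entries; $C^*(X)$ its closure. $\operatorname{supp}_\varepsilon(T)=\{(x,y):\|T_{xy}\|\ge\varepsilon\}$, $r(\cdot)$ the first-coordinate projection, closures in $\beta X$. $\mathcal I(X,U)$ is the closed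 ideal of $C^*(X)$ generated by $\{T\in\mathbb C[X]:\overline{r(\operatorname{supp}_\varepsilon T)}\subseteq U\ \forall\varepsilon>0\}$; $\mathcal G(X,U)=\{T\in C^*(X):\overline{r(\operatorname{supp}_\varepsilon T)}\subseteq U\ \forall\varepsilon>0\}$. An isometry $W:\mathcal H_X\to\mathcal H_Y$ covers $f$ if there is $R\ge0$ with $(\delta_y\otimes 1)W(\delta_x\otimes 1)=0$ whenever $d(y,f(x))>R$, where $\delta_x\otimes1$ denotes the projection onto $\mathbb C\delta_x\otimes\mathcal H$. *)

theory Defs
  imports "HOL-Analysis.Analysis" "HOL-Library.Function_Algebras"
begin

definition bounded_geometry :: "'a::metric_space set \<Rightarrow> bool" where
  "bounded_geometry A \<longleftrightarrow>
     (\<forall>R. \<exists>N::nat. \<forall>x\<in>A. finite {y\<in>A. dist x y \<le> R} \<and> card {y\<in>A. dist x y \<le> R} \<le> N)"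

definition bornologous :: "('a::metric_space \<Rightarrow> 'b::metric_space) \<Rightarrow> bool" where
  "bornologous f \<longleftrightarrow> (\<forall>R. \<exists>S. \<forall>x y. dist x y \<le> R \<longrightarrow> dist (f x) (f y) \<le> S)"

definition coarse_equivalence :: "('a::metric_space \<Rightarrow> 'b::metric_space) \<Rightarrow> bool" where
  "coarse_equivalence f \<longleftrightarrow> bornologous f \<and>
     (\<exists>g. bornologous g \<and> (\<exists>C. \<forall>x. dist (g (f x)) x \<le> C) \<and> (\<exists>C. \<forall>y. dist (f (g y)) y \<le> C))"

section \<open>Stone--Cech compactification of a discrete set, as ultrafilters\<close>

definition ultra :: "'a set set \<Rightarrow> bool" where
  "ultra p \<longleftrightarrow> {} \<notin> p \<and> UNIV \<in> p \<and> (\<forall>A\<in>p. \<forall>B\<in>p. A \<inter> B \<in> p)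
     \<and> (\<forall>A\<in>p. \<forall>B. A \<subseteq> B \<longrightarrow> B \<in> p) \<and> (\<forall>A. A \<in> p \<or> - A \<in> p)"

definition principal :: "'a \<Rightarrow> 'a set set" where
  "principal x = {A. x \<in> A}"

definition beta_top :: "'a set set topology" where
  "beta_top = topology (\<lambda>U. U \<subseteq> {p. ultra p} \<and>
      (\<forall>p\<in>U. \<exists>A\<in>p. {q. ultra q \<and> A \<in> q} \<subseteq> U))"

text \<open>Continuous extension beta X -> beta Y of a map X -> Y.\<close>
definition umap :: "('a \<Rightarrow> 'b) \<Rightarrow> 'a set set \<Rightarrow> 'b set set" where
  "umap f p = {B. f -` B \<in> p}"

definition coarse_groupoid :: "('a::metric_space \<times> 'a) set set set" where
  "coarse_groupoid = (\<Union>R\<in>{R::real. R \<ge> 0}.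
      beta_top closure_of (principal ` {(x, y). dist x y \<le> R}))"

definition invariant :: "'a::metric_space set set set \<Rightarrow> bool" where
  "invariant U \<longleftrightarrow> (\<forall>\<gamma>\<in>(coarse_groupoid :: ('a \<times> 'a) set set set).
      umap fst \<gamma> \<in> U \<longleftrightarrow> umap snd \<gamma> \<in> U)"

definition coarse_ideal_pair :: "'a::metric_space set set set \<Rightarrow> bool" where
  "coarse_ideal_pair U \<longleftrightarrow> bounded_geometry (UNIV :: 'a set) \<and> openin beta_top U \<and> invariant U"

definition coarse_equiv_pairs ::
  "('a::metric_space \<Rightarrow> 'b::metric_space) \<Rightarrow> 'a set set set \<Rightarrow> 'b set set set \<Rightarrow> bool" where
  "coarse_equiv_pairs f U V \<longleftrightarrow> coarse_equivalence f \<and>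
     openin beta_top V \<and> invariant V \<and> umap f ` U \<subseteq> V \<and>
     (\<forall>V'. openin beta_top V' \<and> invariant V' \<and> umap f ` U \<subseteq> V' \<longrightarrow> V \<subseteq> V')"

definition l2 :: "('i \<Rightarrow> complex) set" where
  "l2 = {v. (\<lambda>i. (cmod (v i))\<^sup>2) summable_on UNIV}"

definition l2norm :: "('i \<Rightarrow> complex) \<Rightarrow> real" where
  "l2norm v = sqrt (infsum (\<lambda>i. (cmod (v i))\<^sup>2) UNIV)"

definition l2inner :: "('i \<Rightarrow> complex) \<Rightarrow> ('i \<Rightarrow> complex) \<Rightarrow> complex" where
  "l2inner u v = infsum (\<lambda>i. u i * cnj (v i)) UNIV"

definition csc :: "complex \<Rightarrow> ('i \<Rightarrow> complex) \<Rightarrow> ('i \<Rightarrow> complex)" where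
  "csc c u = (\<lambda>i. c * u i)"

text \<open>Bounded linear operators l2(I) -> l2(J), normalised to be 0 outside l2(I).\<close>
definition BOP :: "(('i \<Rightarrow> complex) \<Rightarrow> ('j \<Rightarrow> complex)) set" where
  "BOP = {T. (\<forall>v\<in>l2. T v \<in> l2)
       \<and> (\<forall>u\<in>l2. \<forall>v\<in>l2. T (u + v) = T u + T v)
       \<and> (\<forall>c. \<forall>u\<in>l2. T (csc c u) = csc c (T u))
       \<and> (\<exists>K. \<forall>v\<in>l2. l2norm (T v) \<le> K * l2norm v)
       \<and> (\<forall>v. v \<notin> l2 \<longrightarrow> T v = 0)}"

definition opnorm :: "(('i \<Rightarrow> complex) \<Rightarrow> ('j \<Rightarrow> complex)) \<Rightarrow> real" where
  "opnorm T = Sup {l2norm (T v) | v. v \<in> l2 \<and> l2norm v \<le> 1}"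

definition adj :: "(('i \<Rightarrow> complex) \<Rightarrow> ('j \<Rightarrow> complex)) \<Rightarrow> (('j \<Rightarrow> complex) \<Rightarrow> ('i \<Rightarrow> complex))" where
  "adj W = (SOME S. S \<in> BOP \<and> (\<forall>u\<in>l2. \<forall>v\<in>l2. l2inner (W u) v = l2inner u (S v)))"

definition isometry :: "(('i \<Rightarrow> complex) \<Rightarrow> ('j \<Rightarrow> complex)) \<Rightarrow> bool" where
  "isometry W \<longleftrightarrow> W \<in> BOP \<and> (\<forall>v\<in>l2. l2norm (W v) = l2norm v)"

definition unitary :: "(('i \<Rightarrow> complex) \<Rightarrow> ('j \<Rightarrow> complex)) \<Rightarrow> bool" where
  "unitary W \<longleftrightarrow> isometry W \<and> W ` l2 = l2"

definition Ad :: "(('i \<Rightarrow> complex) \<Rightarrow> ('j \<Rightarrow> complex)) \<Rightarrow> (('i \<Rightarrow> complex) \<Rightarrow> ('i \<Rightarrow> complex))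
                  \<Rightarrow> (('j \<Rightarrow> complex) \<Rightarrow> ('j \<Rightarrow> complex))" where
  "Ad W T = W \<circ> T \<circ> adj W"

definition compact_op :: "((nat \<Rightarrow> complex) \<Rightarrow> (nat \<Rightarrow> complex)) \<Rightarrow> bool" where
  "compact_op K \<longleftrightarrow> K \<in> BOP \<and>
     (\<forall>s::nat \<Rightarrow> nat \<Rightarrow> complex. (\<forall>n. s n \<in> l2 \<and> l2norm (s n) \<le> 1) \<longrightarrow>
        (\<exists>(r::nat \<Rightarrow> nat) w. strict_mono r \<and> w \<in> l2 \<and> (\<lambda>n. l2norm (K (s (r n)) - w)) \<longlonglongrightarrow> 0))"

section \<open>H_X = l2(X) (x) H = l2(X x nat), matrix entries, Roe algebras\<close>

definition embed :: "'a \<Rightarrow> (nat \<Rightarrow> complex) \<Rightarrow> ('a \<times> nat \<Rightarrow> complex)" where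
  "embed y v = (\<lambda>(y', n). if y' = y then v n else 0)"

definition entry :: "(('a \<times> nat \<Rightarrow> complex) \<Rightarrow> ('b \<times> nat \<Rightarrow> complex)) \<Rightarrow> 'b \<Rightarrow> 'a
                     \<Rightarrow> (nat \<Rightarrow> complex) \<Rightarrow> (nat \<Rightarrow> complex)" where
  "entry T x y = (\<lambda>v. if v \<in> l2 then (\<lambda>n. T (embed y v) (x, n)) else 0)"

definition alg_roe :: "(('a::metric_space \<times> nat \<Rightarrow> complex) \<Rightarrow> ('a \<times> nat \<Rightarrow> complex)) set" where
  "alg_roe = {T \<in> BOP. (\<exists>R. \<forall>x y. dist x y > R \<longrightarrow> entry T x y = 0)
                      \<and> (\<forall>x y. compact_op (entry T x y))}"

definition roe :: "(('a::metric_space \<times> nat \<Rightarrow> complex) \<Rightarrow> ('a \<times> nat \<Rightarrow> complex)) set" where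
  "roe = {T \<in> BOP. \<forall>\<epsilon>>0. \<exists>S\<in>alg_roe. opnorm (T - S) < \<epsilon>}"

definition closed_ideal_in :: "(('i \<Rightarrow> complex) \<Rightarrow> ('i \<Rightarrow> complex)) set \<Rightarrow> (('i \<Rightarrow> complex) \<Rightarrow> ('i \<Rightarrow> complex)) set \<Rightarrow> bool" where
  "closed_ideal_in A I \<longleftrightarrow> I \<subseteq> A \<and> 0 \<in> I
     \<and> (\<forall>S\<in>I. \<forall>T\<in>I. S + T \<in> I)
     \<and> (\<forall>c. \<forall>S\<in>I. (\<lambda>v. csc c (S v)) \<in> I)
     \<and> (\<forall>a\<in>A. \<forall>S\<in>I. a \<circ> S \<in> I \<and> S \<circ> a \<in> I)
     \<and> (\<forall>T\<in>A. (\<forall>\<epsilon>>0. \<exists>S\<in>I. opnorm (T - S) < \<epsilon>) \<longrightarrow> T \<in> I)"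

definition ideal_generated :: "(('i \<Rightarrow> complex) \<Rightarrow> ('i \<Rightarrow> complex)) set \<Rightarrow> (('i \<Rightarrow> complex) \<Rightarrow> ('i \<Rightarrow> complex)) set \<Rightarrow> (('i \<Rightarrow> complex) \<Rightarrow> ('i \<Rightarrow> complex)) set" where
  "ideal_generated A J = \<Inter> {I. closed_ideal_in A I \<and> J \<subseteq> I}"

definition supp_eps :: "real \<Rightarrow> (('a \<times> nat \<Rightarrow> complex) \<Rightarrow> ('a \<times> nat \<Rightarrow> complex)) \<Rightarrow> ('a \<times> 'a) set" where
  "supp_eps \<epsilon> T = {(x, y). opnorm (entry T x y) \<ge> \<epsilon>}"

definition supported_in :: "'a set set set \<Rightarrow> (('a \<times> nat \<Rightarrow> complex) \<Rightarrow> ('a \<times> nat \<Rightarrow> complex)) \<Rightarrow> bool" where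
  "supported_in U T \<longleftrightarrow> (\<forall>\<epsilon>>0. beta_top closure_of (principal ` fst ` supp_eps \<epsilon> T) \<subseteq> U)"

definition ideal_I :: "'a::metric_space set set set \<Rightarrow> (('a \<times> nat \<Rightarrow> complex) \<Rightarrow> ('a \<times> nat \<Rightarrow> complex)) set" where
  "ideal_I U = ideal_generated roe {T \<in> alg_roe. supported_in U T}"

definition ideal_G :: "'a::metric_space set set set \<Rightarrow> (('a \<times> nat \<Rightarrow> complex) \<Rightarrow> ('a \<times> nat \<Rightarrow> complex)) set" where
  "ideal_G U = {T \<in> roe. supported_in U T}"

definition covers :: "(('a \<times> nat \<Rightarrow> complex) \<Rightarrow> ('b \<times> nat \<Rightarrow> complex)) \<Rightarrow> ('a::metric_space \<Rightarrow> 'b::metric_space) \<Rightarrow> bool" where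
  "covers W f \<longleftrightarrow> (\<exists>R\<ge>0. \<forall>x y. dist y (f x) > R \<longrightarrow> entry W y x = 0)"

end

theory Submission
  imports Defs
begin

(* Write H_X = l2(X x N). A coarse equivalence f : X -> Y of spaces of bounded geometry is
   implemented by a bijection psi : Y x N -> X x N which moves points a bounded distance:
   psi (y, m) = (x, k) implies d(y, f x) <= C. The permutation unitary W v = v o psi covers f,
   and Ad W is conjugation by psi. Every matrix entry of Ad W T is a finite sum of compressions
   of entries T_{x x'} over the uniformly finite, coarsely controlled blocks of psi; hence Ad W
   preserves finite propagation, compactness of entries and operator norms, and conjugation by
   psi^-1 maps back. Supports move from U to V by invariance of V: an ultrafilter near f(A) is
   the range of an element of the coarse groupoid whose source lies over A. Finally, pulling
   closed ideals back along the isomorphism Ad W carries the ideal generated by U-supported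
   operators into I(Y, V). *)

section \<open>Square-summable functions\<close>

lemma sum_apply_fun: "sum z F k = (\<Sum>i\<in>F. z i k)"
  by (induction F rule: infinite_finite_induct) auto

definition sqmod :: "('i \<Rightarrow> complex) \<Rightarrow> 'i \<Rightarrow> real" where
  "sqmod v = (\<lambda>i. (cmod (v i))\<^sup>2)"

lemma sqmod_nonneg: "sqmod v i \<ge> 0"
  by (simp add: sqmod_def)

lemma l2_iff_summable: "v \<in> l2 \<longleftrightarrow> sqmod v summable_on UNIV"
  by (simp add: l2_def sqmod_def)

lemma power2_l2norm: "(l2norm v)\<^sup>2 = infsum (sqmod v) UNIV"
  by (simp add: l2norm_def sqmod_def infsum_nonneg)

lemma l2norm_nonneg [simp]: "l2norm v \<ge> 0"
  by (simp add: l2norm_def infsum_nonneg)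

lemma l2norm_eq_sqrt: "l2norm v = sqrt (infsum (sqmod v) UNIV)"
  by (simp add: l2norm_def sqmod_def)

lemma zero_in_l2 [simp]: "0 \<in> l2"
  by (simp add: l2_iff_summable sqmod_def)

lemma l2norm_zero [simp]: "l2norm 0 = 0"
  by (simp add: l2norm_def)

lemma sqmod_csc: "sqmod (csc c v) = (\<lambda>i. (cmod c)\<^sup>2 * sqmod v i)"
  by (simp add: sqmod_def csc_def norm_mult power_mult_distrib)

lemma l2_csc: "v \<in> l2 \<Longrightarrow> csc c v \<in> l2"
  unfolding l2_iff_summable sqmod_csc by (rule summable_on_cmult_right)

lemma l2norm_csc: "l2norm (csc c v) = cmod c * l2norm v"
  by (simp add: l2norm_eq_sqrt sqmod_csc infsum_cmult_right' real_sqrt_mult)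

lemma csc_zero [simp]: "csc c 0 = 0"
  by (simp add: csc_def fun_eq_iff)

lemma csc_one [simp]: "csc 1 v = v"
  by (simp add: csc_def)

lemma csc_csc: "csc c (csc d v) = csc (c * d) v"
  by (simp add: csc_def fun_eq_iff)

lemma csc_diff: "csc c u - csc c v = csc c (u - v)"
  by (simp add: csc_def fun_eq_iff algebra_simps)

lemma sqmod_add_le: "sqmod (u + v) i \<le> 2 * sqmod u i + 2 * sqmod v i"
proof -
  have "cmod (u i + v i) \<le> cmod (u i) + cmod (v i)"
    by (rule norm_triangle_ineq)
  then have "(cmod (u i + v i))\<^sup>2 \<le> (cmod (u i) + cmod (v i))\<^sup>2"
    by (simp add: power_mono)
  also have "\<dots> \<le> 2 * (cmod (u i))\<^sup>2 + 2 * (cmod (v i))\<^sup>2"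
    using zero_le_power2[of "cmod (u i) - cmod (v i)"] by (simp add: power2_eq_square algebra_simps)
  finally show ?thesis by (simp add: sqmod_def)
qed

lemma l2_add: "u \<in> l2 \<Longrightarrow> v \<in> l2 \<Longrightarrow> u + v \<in> l2"
  unfolding l2_iff_summable
  by (rule summable_on_comparison_test[where f = "\<lambda>i. 2 * sqmod u i + 2 * sqmod v i"])
    (simp_all add: summable_on_add summable_on_cmult_right sqmod_add_le sqmod_nonneg)

lemma power2_l2norm_add_le:
  assumes "u \<in> l2" "v \<in> l2"
  shows "(l2norm (u + v))\<^sup>2 \<le> 2 * (l2norm u)\<^sup>2 + 2 * (l2norm v)\<^sup>2"
proof -
  have uv: "sqmod u summable_on UNIV" "sqmod v summable_on UNIV"
    using assms by (simp_all add: l2_iff_summable)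
  have "infsum (sqmod (u + v)) UNIV \<le> infsum (\<lambda>i. 2 * sqmod u i + 2 * sqmod v i) UNIV"
    using l2_add[OF assms] uv
    by (intro infsum_mono sqmod_add_le summable_on_add summable_on_cmult_right)
      (simp_all add: l2_iff_summable)
  also have "\<dots> = 2 * infsum (sqmod u) UNIV + 2 * infsum (sqmod v) UNIV"
    using uv by (simp add: infsum_add summable_on_cmult_right infsum_cmult_right')
  finally show ?thesis by (simp add: power2_l2norm)
qed

lemma l2_diff:
  assumes "u \<in> l2" "v \<in> l2"
  shows "u - v \<in> l2"
proof -
  have "u - v = u + csc (-1) v"
    by (simp add: csc_def fun_eq_iff)
  then show ?thesis
    using l2_add[OF assms(1) l2_csc[OF assms(2)], of "-1"] by (simp only:)
qed

lemma l2_sum: "finite F \<Longrightarrow> (\<And>i. i \<in> F \<Longrightarrow> z i \<in> l2) \<Longrightarrow> sum z F \<in> l2"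
  by (induction F rule: finite_induct) (auto intro: l2_add)

lemma infsum_finite_sum:
  fixes g :: "'k \<Rightarrow> 'i \<Rightarrow> real"
  assumes "finite F" "\<And>k. k \<in> F \<Longrightarrow> g k summable_on A"
  shows "infsum (\<lambda>i. \<Sum>k\<in>F. g k i) A = (\<Sum>k\<in>F. infsum (g k) A)"
    and "(\<lambda>i. \<Sum>k\<in>F. g k i) summable_on A"
  using assms by (induction F rule: finite_induct) (simp_all add: infsum_add summable_on_add)

lemma power2_l2norm_sum_le:
  assumes F: "finite F" and z: "\<And>k. k \<in> F \<Longrightarrow> z k \<in> l2"
  shows "(l2norm (sum z F))\<^sup>2 \<le> card F * (\<Sum>k\<in>F. (l2norm (z k))\<^sup>2)"
proof -
  have summable: "\<And>k. k \<in> F \<Longrightarrow> sqmod (z k) summable_on UNIV"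
    using z by (simp add: l2_iff_summable)
  have pointwise: "sqmod (sum z F) i \<le> card F * (\<Sum>k\<in>F. sqmod (z k) i)" for i
  proof -
    have "cmod (sum z F i) \<le> (\<Sum>k\<in>F. cmod (z k i))"
      unfolding sum_apply_fun by (rule norm_sum)
    then have "(cmod (sum z F i))\<^sup>2 \<le> (\<Sum>k\<in>F. cmod (z k i))\<^sup>2"
      by (simp add: power_mono)
    also have "\<dots> \<le> (\<Sum>k\<in>F. (cmod (z k i))\<^sup>2) * card F"
      by (rule sum_squared_le_sum_of_squares)
    finally show ?thesis by (simp add: sqmod_def mult.commute)
  qed
  have "infsum (sqmod (sum z F)) UNIV \<le> infsum (\<lambda>i. card F * (\<Sum>k\<in>F. sqmod (z k) i)) UNIV"
    using l2_sum[OF F z] infsum_finite_sum(2)[OF F summable] pointwise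
    by (intro infsum_mono summable_on_cmult_right) (simp_all add: l2_iff_summable)
  also have "\<dots> = card F * (\<Sum>k\<in>F. infsum (sqmod (z k)) UNIV)"
    by (simp add: infsum_cmult_right' infsum_finite_sum(1)[OF F summable])
  finally show ?thesis by (simp add: power2_l2norm)
qed

lemma l2norm_sum_le:
  fixes c :: real
  assumes F: "finite F" and l2_z: "\<And>k. k \<in> F \<Longrightarrow> z k \<in> l2"
    and bound: "\<And>k. k \<in> F \<Longrightarrow> l2norm (z k) \<le> c"
  shows "l2norm (sum z F) \<le> card F * c"
proof (rule power2_le_imp_le)
  have "(\<Sum>k\<in>F. (l2norm (z k))\<^sup>2) \<le> card F * c\<^sup>2"
    using sum_bounded_above[of F "\<lambda>k. (l2norm (z k))\<^sup>2" "c\<^sup>2"] bound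
    by (simp add: power_mono)
  then have "card F * (\<Sum>k\<in>F. (l2norm (z k))\<^sup>2) \<le> card F * (card F * c\<^sup>2)"
    by (simp add: mult_left_mono)
  also have "\<dots> = (card F * c)\<^sup>2"
    by (simp add: power2_eq_square)
  finally show "(l2norm (sum z F))\<^sup>2 \<le> (card F * c)\<^sup>2"
    using power2_l2norm_sum_le[of F z, OF F l2_z] by linarith
  show "0 \<le> card F * c"
    using bound order_trans[OF l2norm_nonneg] by (cases "F = {}") (auto intro!: mult_nonneg_nonneg)
qed

lemma l2_comp_bij: "bij h \<Longrightarrow> v \<circ> h \<in> l2 \<longleftrightarrow> v \<in> l2"
  using summable_on_reindex_bij_betw[of h UNIV UNIV "sqmod v"]
  by (simp add: l2_iff_summable sqmod_def o_def)

lemma l2norm_comp_bij: "bij h \<Longrightarrow> l2norm (v \<circ> h) = l2norm v"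
  using infsum_reindex_bij_betw[of h UNIV UNIV "sqmod v"]
  by (simp add: l2norm_eq_sqrt sqmod_def o_def)

definition compress :: "'j set \<Rightarrow> ('j \<Rightarrow> 'i) \<Rightarrow> ('i \<Rightarrow> complex) \<Rightarrow> 'j \<Rightarrow> complex" where
  "compress D s z = (\<lambda>n. if n \<in> D then z (s n) else 0)"

lemma l2_compress:
  assumes inj: "inj_on s D" and z: "z \<in> l2"
  shows "compress D s z \<in> l2" and "l2norm (compress D s z) \<le> l2norm z"
proof -
  have zs: "sqmod z summable_on UNIV"
    using z by (simp add: l2_iff_summable)
  have zs': "sqmod z summable_on s ` D"
    by (rule summable_on_subset_banach[OF zs]) simp
  have on_D: "sqmod (compress D s z) summable_on UNIV \<longleftrightarrow> sqmod (compress D s z) summable_on D"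
    "infsum (sqmod (compress D s z)) UNIV = infsum (sqmod (compress D s z)) D"
    by (rule summable_on_cong_neutral infsum_cong_neutral; simp add: sqmod_def compress_def)+
  have reindex: "sqmod (compress D s z) summable_on D \<longleftrightarrow> sqmod z summable_on s ` D"
    "infsum (sqmod (compress D s z)) D = infsum (sqmod z) (s ` D)"
    using summable_on_reindex[OF inj, of "sqmod z"] infsum_reindex[OF inj, of "sqmod z"]
    by (auto intro!: summable_on_cong infsum_cong simp: sqmod_def compress_def)
  have "infsum (sqmod z) (s ` D) \<le> infsum (sqmod z) UNIV"
    by (rule infsum_mono_neutral[OF zs' zs]) (auto simp: sqmod_nonneg)
  then show "compress D s z \<in> l2" "l2norm (compress D s z) \<le> l2norm z"
    using on_D reindex zs' by (simp_all add: l2_iff_summable l2norm_eq_sqrt)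
qed

definition component :: "'a \<Rightarrow> ('a \<times> 'n \<Rightarrow> complex) \<Rightarrow> 'n \<Rightarrow> complex" where
  "component x w = (\<lambda>n. w (x, n))"

lemma component_eq_compress: "component x w = compress UNIV (Pair x) w"
  by (simp add: component_def compress_def)

lemma l2_component: "w \<in> l2 \<Longrightarrow> component x w \<in> l2"
  and l2norm_component_le: "w \<in> l2 \<Longrightarrow> l2norm (component x w) \<le> l2norm w"
  unfolding component_eq_compress by (rule l2_compress; simp add: inj_on_def)+

lemma component_embed [simp]: "component y (embed y v) = v"
  by (simp add: component_def embed_def)

lemma embed_eq_compress: "embed y v = compress {p. fst p = y} snd v"
  by (auto simp: embed_def compress_def fun_eq_iff)

lemma l2_embed: "v \<in> l2 \<Longrightarrow> embed y v \<in> l2"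
  unfolding embed_eq_compress by (rule l2_compress) (auto simp: inj_on_def prod_eq_iff)

lemma l2norm_embed:
  assumes "v \<in> l2"
  shows "l2norm (embed y v) = l2norm v"
proof (rule antisym)
  show "l2norm (embed y v) \<le> l2norm v"
    unfolding embed_eq_compress by (rule l2_compress(2)) (auto simp: inj_on_def prod_eq_iff assms)
  show "l2norm v \<le> l2norm (embed y v)"
    using l2norm_component_le[OF l2_embed[OF assms], of y y] by simp
qed

lemma component_add: "component x (u + v) = component x u + component x v"
  by (simp add: component_def fun_eq_iff)

lemma component_csc: "component x (csc c u) = csc c (component x u)"
  by (simp add: component_def fun_eq_iff csc_def)

lemma embed_add: "embed y (u + v) = embed y u + embed y v"
  by (auto simp: embed_def fun_eq_iff)

lemma embed_csc: "embed y (csc c u) = csc c (embed y u)"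
  by (auto simp: embed_def fun_eq_iff csc_def)

definition unit_vec :: "'i \<Rightarrow> 'i \<Rightarrow> complex" where
  "unit_vec j = (\<lambda>i. if i = j then 1 else 0)"

lemma l2_unit_vec: "unit_vec j \<in> l2"
proof -
  have "sqmod (unit_vec j) summable_on {j}"
    by simp
  moreover have "sqmod (unit_vec j) summable_on {j} \<longleftrightarrow> sqmod (unit_vec j) summable_on UNIV"
    by (rule summable_on_cong_neutral) (auto simp: sqmod_def unit_vec_def)
  ultimately show ?thesis
    by (simp add: l2_iff_summable)
qed

lemma l2inner_unit_vec: "l2inner (unit_vec j) z = cnj (z j)"
proof -
  have "infsum (\<lambda>i. unit_vec j i * cnj (z i)) UNIV = infsum (\<lambda>i. unit_vec j i * cnj (z i)) {j}"
    by (rule infsum_cong_neutral) (auto simp: unit_vec_def)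
  then show ?thesis by (simp add: l2inner_def unit_vec_def)
qed

section \<open>Bounded operators and their matrix entries\<close>

lemma BOP_l2: "T \<in> BOP \<Longrightarrow> v \<in> l2 \<Longrightarrow> T v \<in> l2"
  and BOP_add: "T \<in> BOP \<Longrightarrow> u \<in> l2 \<Longrightarrow> v \<in> l2 \<Longrightarrow> T (u + v) = T u + T v"
  and BOP_csc: "T \<in> BOP \<Longrightarrow> u \<in> l2 \<Longrightarrow> T (csc c u) = csc c (T u)"
  and BOP_out: "T \<in> BOP \<Longrightarrow> v \<notin> l2 \<Longrightarrow> T v = 0"
  by (simp_all add: BOP_def)

lemma BOPI:
  assumes "\<And>v. v \<in> l2 \<Longrightarrow> T v \<in> l2"
    and "\<And>u v. u \<in> l2 \<Longrightarrow> v \<in> l2 \<Longrightarrow> T (u + v) = T u + T v"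
    and "\<And>c u. u \<in> l2 \<Longrightarrow> T (csc c u) = csc c (T u)"
    and "\<And>v. v \<in> l2 \<Longrightarrow> l2norm (T v) \<le> K * l2norm v"
    and "\<And>v. v \<notin> l2 \<Longrightarrow> T v = 0"
  shows "T \<in> BOP"
  using assms unfolding BOP_def by blast

lemma BOP_bound:
  assumes "T \<in> BOP"
  obtains K where "K \<ge> 0" "\<And>v. v \<in> l2 \<Longrightarrow> l2norm (T v) \<le> K * l2norm v"
proof -
  obtain K where K: "\<And>v. v \<in> l2 \<Longrightarrow> l2norm (T v) \<le> K * l2norm v"
    using assms unfolding BOP_def by blast
  have "l2norm (T v) \<le> max K 0 * l2norm v" if "v \<in> l2" for v
    using K[OF that] mult_right_mono[of K "max K 0" "l2norm v"] by simp
  then show ?thesis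
    using that[of "max K 0"] by simp
qed

lemma BOP_zero: "T \<in> BOP \<Longrightarrow> T 0 = 0"
  using BOP_add[of T 0 0] by simp

lemma BOP_sum:
  assumes "T \<in> BOP" "finite F" "\<And>i. i \<in> F \<Longrightarrow> z i \<in> l2"
  shows "T (sum z F) = (\<Sum>i\<in>F. T (z i))"
  using assms(2,3) by (induction F rule: finite_induct) (simp_all add: BOP_zero BOP_add l2_sum assms(1) fun_eq_iff)

lemma opnorm_zero [simp]: "opnorm 0 = 0"
proof -
  have zero: "{l2norm ((0 :: ('i \<Rightarrow> complex) \<Rightarrow> ('j \<Rightarrow> complex)) v) |v. v \<in> l2 \<and> l2norm v \<le> 1} = {0}"
    by (auto intro!: exI[of _ 0])
  show "opnorm (0 :: ('i \<Rightarrow> complex) \<Rightarrow> ('j \<Rightarrow> complex)) = 0"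
    unfolding opnorm_def zero by simp
qed

lemma opnorm_least:
  assumes "\<And>v. v \<in> l2 \<Longrightarrow> l2norm (T v) \<le> K * l2norm v" "0 \<le> K"
  shows "opnorm T \<le> K"
  unfolding opnorm_def
proof (rule cSup_least)
  show "{l2norm (T v) |v. v \<in> l2 \<and> l2norm v \<le> 1} \<noteq> {}"
    by (auto intro: exI[of _ 0])
  show "r \<le> K" if "r \<in> {l2norm (T v) |v. v \<in> l2 \<and> l2norm v \<le> 1}" for r
    using that assms mult_left_mono[of _ 1 K] by (force dest: assms(1))
qed

lemma opnorm_upper:
  assumes "T \<in> BOP" "v \<in> l2" "l2norm v \<le> 1"
  shows "l2norm (T v) \<le> opnorm T"
proof -
  obtain K where K: "K \<ge> 0" "\<And>v. v \<in> l2 \<Longrightarrow> l2norm (T v) \<le> K * l2norm v"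
    using BOP_bound[OF assms(1)] by blast
  have "bdd_above {l2norm (T v) |v. v \<in> l2 \<and> l2norm v \<le> 1}"
    by (rule bdd_aboveI[where M = K]) (use K mult_left_mono[of _ 1 K] in \<open>force dest: K(2)\<close>)
  then show ?thesis
    unfolding opnorm_def by (rule cSup_upper[rotated]) (use assms(2,3) in blast)
qed

lemma opnorm_nonneg:
  assumes "T \<in> BOP"
  shows "opnorm T \<ge> 0"
proof -
  have "l2norm (T 0) \<le> opnorm T"
    using opnorm_upper[OF assms zero_in_l2] by simp
  then show ?thesis
    by (simp only: BOP_zero[OF assms] l2norm_zero)
qed

lemma l2norm_le_opnorm:
  assumes T: "T \<in> BOP" and v: "v \<in> l2"
  shows "l2norm (T v) \<le> opnorm T * l2norm v"
proof (cases "l2norm v = 0")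
  case True
  obtain K where "\<And>v. v \<in> l2 \<Longrightarrow> l2norm (T v) \<le> K * l2norm v"
    using BOP_bound[OF T] by blast
  then show ?thesis using True v by force
next
  case False
  then have pos: "l2norm v > 0"
    using l2norm_nonneg[of v] by linarith
  define c where "c = complex_of_real (1 / l2norm v)"
  have cm: "cmod c = 1 / l2norm v"
    using pos by (simp add: c_def norm_divide)
  have "l2norm (T (csc c v)) \<le> opnorm T"
    by (rule opnorm_upper[OF T l2_csc[OF v]]) (use pos in \<open>simp add: l2norm_csc cm\<close>)
  then show ?thesis
    using pos by (simp add: BOP_csc[OF T v] l2norm_csc cm divide_le_eq mult.commute)
qed

lemma entry_eq_component: "w \<in> l2 \<Longrightarrow> entry T x y w = component x (T (embed y w))"
  by (simp add: entry_def component_def)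

lemma entry_BOP:
  assumes T: "T \<in> BOP"
  shows "entry T x y \<in> BOP"
proof -
  obtain K where K: "K \<ge> 0" "\<And>v. v \<in> l2 \<Longrightarrow> l2norm (T v) \<le> K * l2norm v"
    using BOP_bound[OF T] by blast
  show ?thesis
  proof (rule BOPI[where K = K])
    show "entry T x y v \<in> l2" if "v \<in> l2" for v
      using that by (simp add: entry_eq_component l2_component BOP_l2[OF T] l2_embed)
    show "entry T x y (u + v) = entry T x y u + entry T x y v" if "u \<in> l2" "v \<in> l2" for u v
      using that by (simp add: entry_eq_component l2_add embed_add BOP_add[OF T] l2_embed component_add)
    show "entry T x y (csc c u) = csc c (entry T x y u)" if "u \<in> l2" for c u
      using that by (simp add: entry_eq_component l2_csc embed_csc BOP_csc[OF T] l2_embed component_csc)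
    show "l2norm (entry T x y w) \<le> K * l2norm w" if w: "w \<in> l2" for w
      using order_trans[OF l2norm_component_le[OF BOP_l2[OF T l2_embed[OF w]]] K(2)[OF l2_embed[OF w]]]
      by (simp add: entry_eq_component w l2norm_embed)
    show "entry T x y v = 0" if "v \<notin> l2" for v
      using that by (simp add: entry_def)
  qed
qed

lemma sum_embed_component:
  assumes "finite F" "\<And>x n. x \<notin> F \<Longrightarrow> u (x, n) = 0"
  shows "(\<Sum>x\<in>F. embed x (component x u)) = u"
proof
  fix p
  show "(\<Sum>x\<in>F. embed x (component x u)) p = u p"
    using assms by (cases p) (auto simp: sum_apply_fun embed_def component_def sum.delta)
qed

lemma component_sum: "component x (sum z F) = (\<Sum>i\<in>F. component x (z i))"
  by (simp add: fun_eq_iff component_def sum_apply_fun)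

lemma component_apply_eq_sum_entries:
  assumes T: "T \<in> BOP" and u: "u \<in> l2" and F: "finite F"
    and vanish: "\<And>x n. x \<notin> F \<Longrightarrow> u (x, n) = 0"
  shows "component x0 (T u) = (\<Sum>x\<in>F. entry T x0 x (component x u))"
proof -
  have "T u = (\<Sum>x\<in>F. T (embed x (component x u)))"
    using BOP_sum[OF T F, of "\<lambda>x. embed x (component x u)"] sum_embed_component[OF F, of u] vanish
    by (simp add: l2_embed l2_component u)
  then show ?thesis
    by (simp add: component_sum entry_eq_component l2_component u)
qed

lemma adj_eqI:
  assumes S: "S \<in> BOP" and adjoint: "\<And>u v. u \<in> l2 \<Longrightarrow> v \<in> l2 \<Longrightarrow> l2inner (W u) v = l2inner u (S v)"
  shows "adj W = S"
proof -
  let ?P = "\<lambda>S. S \<in> BOP \<and> (\<forall>u\<in>l2. \<forall>v\<in>l2. l2inner (W u) v = l2inner u (S v))"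
  have unique: "S' = S" if "?P S'" for S'
  proof
    fix v
    show "S' v = S v"
    proof (cases "v \<in> l2")
      case True
      have "cnj (S' v j) = cnj (S v j)" for j
        using that adjoint[OF l2_unit_vec True, of j] True l2_unit_vec[of j] by (simp add: l2inner_unit_vec)
      then show ?thesis
        by (simp add: fun_eq_iff)
    next
      case False
      then show ?thesis
        using that S by (simp add: BOP_out)
    qed
  qed
  have "?P S"
    using S adjoint by blast
  then show ?thesis
    unfolding adj_def using unique by (rule some_equality)
qed

section \<open>Permutation unitaries and conjugation\<close>

definition perm_op :: "('b \<Rightarrow> 'a) \<Rightarrow> ('a \<Rightarrow> complex) \<Rightarrow> ('b \<Rightarrow> complex)" where
  "perm_op \<psi> = (\<lambda>v. if v \<in> l2 then v \<circ> \<psi> else 0)"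

lemma comp_add: "(u + v) \<circ> g = (u \<circ> g) + (v \<circ> g)"
  and comp_csc: "csc c u \<circ> g = csc c (u \<circ> g)"
  by (simp_all add: fun_eq_iff csc_def)

lemma comp_zero [simp]: "0 \<circ> g = 0"
  by (simp add: fun_eq_iff)

lemma comp_comp_inv_cancel: "bij \<psi> \<Longrightarrow> v \<circ> \<psi> \<circ> inv \<psi> = v"
  by (metis bij_is_surj comp_assoc comp_id surj_iff)

lemma l2_comp_inv: "bij \<psi> \<Longrightarrow> v \<in> l2 \<Longrightarrow> v \<circ> inv \<psi> \<in> l2"
  by (simp add: l2_comp_bij bij_imp_bij_inv)

lemma isometry_perm_op:
  assumes "bij \<psi>"
  shows "isometry (perm_op \<psi>)"
proof -
  have "perm_op \<psi> \<in> BOP"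
    by (rule BOPI[where K = 1])
      (simp_all add: perm_op_def l2_comp_bij l2norm_comp_bij assms l2_add l2_csc comp_add comp_csc)
  then show ?thesis
    by (simp add: isometry_def perm_op_def l2norm_comp_bij assms)
qed

lemma unitary_perm_op:
  assumes "bij \<psi>"
  shows "unitary (perm_op \<psi>)"
proof -
  have "w \<in> perm_op \<psi> ` l2" if "w \<in> l2" for w
    using that assms by (intro image_eqI[of _ _ "w \<circ> inv \<psi>"])
      (simp_all add: perm_op_def l2_comp_inv bij_is_inj o_assoc[symmetric])
  then have "perm_op \<psi> ` l2 = l2"
    using assms by (auto simp: perm_op_def l2_comp_bij)
  then show ?thesis
    using isometry_perm_op[OF assms] by (simp add: unitary_def)
qed

lemma adj_perm_op:
  assumes p: "bij \<psi>"
  shows "adj (perm_op \<psi>) = perm_op (inv \<psi>)"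
proof (rule adj_eqI)
  show "perm_op (inv \<psi>) \<in> BOP"
    using isometry_perm_op[OF bij_imp_bij_inv[OF p]] by (simp add: isometry_def)
  show "l2inner (perm_op \<psi> u) v = l2inner u (perm_op (inv \<psi>) v)" if "u \<in> l2" "v \<in> l2" for u v
  proof -
    have "l2inner (perm_op \<psi> u) v = infsum (\<lambda>i. u (\<psi> (inv \<psi> i)) * cnj (v (inv \<psi> i))) UNIV"
      using that infsum_reindex_bij_betw[OF bij_imp_bij_inv[OF p], of "\<lambda>i. u (\<psi> i) * cnj (v i)"]
      by (simp add: perm_op_def l2inner_def)
    also have "\<dots> = l2inner u (perm_op (inv \<psi>) v)"
      using that p by (simp add: perm_op_def l2inner_def l2_comp_inv bij_is_surj surj_f_inv_f)
    finally show ?thesis .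
  qed
qed

definition conj_perm :: "('b \<Rightarrow> 'a) \<Rightarrow> (('a \<Rightarrow> complex) \<Rightarrow> ('a \<Rightarrow> complex))
    \<Rightarrow> (('b \<Rightarrow> complex) \<Rightarrow> ('b \<Rightarrow> complex))" where
  "conj_perm \<psi> T = (\<lambda>v. if v \<in> l2 then T (v \<circ> inv \<psi>) \<circ> \<psi> else 0)"

lemma Ad_perm_op:
  assumes p: "bij \<psi>" and T: "T \<in> BOP"
  shows "Ad (perm_op \<psi>) T = conj_perm \<psi> T"
proof
  fix v
  show "Ad (perm_op \<psi>) T v = conj_perm \<psi> T v"
    unfolding Ad_def adj_perm_op[OF p]
    using p by (simp add: perm_op_def conj_perm_def l2_comp_inv BOP_l2[OF T] BOP_zero[OF T])
qed

lemma conj_perm_BOP: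
  assumes p: "bij \<psi>" and T: "T \<in> BOP"
  shows "conj_perm \<psi> T \<in> BOP"
proof -
  obtain K where K: "K \<ge> 0" "\<And>v. v \<in> l2 \<Longrightarrow> l2norm (T v) \<le> K * l2norm v"
    using BOP_bound[OF T] by blast
  show ?thesis
  proof (rule BOPI[where K = K])
    show "l2norm (conj_perm \<psi> T v) \<le> K * l2norm v" if "v \<in> l2" for v
      using that K(2)[OF l2_comp_inv[OF p that]] p
      by (simp add: conj_perm_def l2norm_comp_bij bij_imp_bij_inv)
  qed (simp_all add: conj_perm_def p T l2_comp_inv l2_comp_bij BOP_l2 l2_add l2_csc comp_add comp_csc
      BOP_add BOP_csc fun_eq_iff)
qed

lemma conj_perm_add: "conj_perm \<psi> (S + T) = conj_perm \<psi> S + conj_perm \<psi> T"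
  and conj_perm_diff: "conj_perm \<psi> (S - T) = conj_perm \<psi> S - conj_perm \<psi> T"
  and conj_perm_csc: "conj_perm \<psi> (\<lambda>v. csc c (S v)) = (\<lambda>v. csc c (conj_perm \<psi> S v))"
  and conj_perm_zero: "conj_perm \<psi> 0 = 0"
  by (auto simp: conj_perm_def fun_eq_iff csc_def)

lemma conj_perm_comp:
  assumes p: "bij \<psi>" and A: "A \<in> BOP" and S: "S \<in> BOP"
  shows "conj_perm \<psi> (A \<circ> S) = conj_perm \<psi> A \<circ> conj_perm \<psi> S"
proof
  fix v
  show "conj_perm \<psi> (A \<circ> S) v = (conj_perm \<psi> A \<circ> conj_perm \<psi> S) v"
    using p by (simp add: conj_perm_def BOP_zero[OF A] BOP_l2[OF S] l2_comp_inv l2_comp_bij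
        comp_comp_inv_cancel)
qed

lemma conj_perm_inv:
  assumes p: "bij \<psi>" and vanish: "\<And>v. v \<notin> l2 \<Longrightarrow> T v = 0"
  shows "conj_perm (inv \<psi>) (conj_perm \<psi> T) = T"
proof
  fix v
  show "conj_perm (inv \<psi>) (conj_perm \<psi> T) v = T v"
    using p vanish[of v] by (simp add: conj_perm_def inv_inv_eq l2_comp_bij comp_comp_inv_cancel)
qed

lemma opnorm_conj_perm:
  assumes p: "bij \<psi>"
  shows "opnorm (conj_perm \<psi> T) = opnorm T"
proof -
  have "{l2norm (conj_perm \<psi> T v) |v. v \<in> l2 \<and> l2norm v \<le> 1}
      = (\<lambda>v. l2norm (T v)) ` {v \<in> l2. l2norm v \<le> 1}" (is "?L = ?R")
  proof
    show "?L \<subseteq> ?R"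
      using p by (auto simp: conj_perm_def l2_comp_inv l2norm_comp_bij bij_imp_bij_inv)
    show "?R \<subseteq> ?L"
    proof
      fix r assume "r \<in> ?R"
      then obtain v where v: "v \<in> l2" "l2norm v \<le> 1" "r = l2norm (T v)"
        by blast
      then show "r \<in> ?L"
        using p by (intro CollectI exI[of _ "v \<circ> \<psi>"])
          (simp add: conj_perm_def l2_comp_bij l2norm_comp_bij comp_comp_inv_cancel)
    qed
  qed
  then show ?thesis
    by (simp add: opnorm_def setcompr_eq_image)
qed

section \<open>Compact maps\<close>

definition compact_map :: "((nat \<Rightarrow> complex) \<Rightarrow> (nat \<Rightarrow> complex)) \<Rightarrow> bool" where
  "compact_map K \<longleftrightarrow> (\<forall>s::nat \<Rightarrow> nat \<Rightarrow> complex. (\<forall>n. s n \<in> l2 \<and> l2norm (s n) \<le> 1) \<longrightarrow>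
     (\<exists>(r::nat \<Rightarrow> nat) w. strict_mono r \<and> w \<in> l2 \<and> (\<lambda>n. l2norm (K (s (r n)) - w)) \<longlonglongrightarrow> 0))"

lemma compact_op_iff: "compact_op K \<longleftrightarrow> K \<in> BOP \<and> compact_map K"
  by (simp add: compact_op_def compact_map_def)

lemma compact_mapE:
  fixes s :: "nat \<Rightarrow> nat \<Rightarrow> complex"
  assumes "compact_map K" "\<And>n. s n \<in> l2" "\<And>n. l2norm (s n) \<le> 1"
  obtains r w where "strict_mono r" "w \<in> l2" "(\<lambda>n. l2norm (K (s (r n)) - w)) \<longlonglongrightarrow> 0"
proof -
  have "\<forall>n. s n \<in> l2 \<and> l2norm (s n) \<le> 1"
    using assms(2,3) by simp
  then show ?thesis
    using compact_map_def[THEN iffD1, OF assms(1), rule_format, of s] that by blast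
qed

lemma compact_mapI:
  assumes "\<And>s :: nat \<Rightarrow> nat \<Rightarrow> complex. (\<And>n. s n \<in> l2) \<Longrightarrow> (\<And>n. l2norm (s n) \<le> 1) \<Longrightarrow>
    \<exists>r w. strict_mono r \<and> w \<in> l2 \<and> (\<lambda>n. l2norm (K (s (r n)) - w)) \<longlonglongrightarrow> 0"
  shows "compact_map K"
  unfolding compact_map_def by (intro allI impI assms) simp_all

lemma compact_map_cong:
  assumes "compact_map K" "\<And>v. v \<in> l2 \<Longrightarrow> K' v = K v"
  shows "compact_map K'"
proof (rule compact_mapI)
  fix s :: "nat \<Rightarrow> nat \<Rightarrow> complex"
  assume s: "\<And>n. s n \<in> l2" "\<And>n. l2norm (s n) \<le> 1"
  obtain r w where "strict_mono r" "w \<in> l2" "(\<lambda>n. l2norm (K (s (r n)) - w)) \<longlonglongrightarrow> 0"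
    using assms(1) s by (rule compact_mapE)
  then show "\<exists>r w. strict_mono r \<and> w \<in> l2 \<and> (\<lambda>n. l2norm (K' (s (r n)) - w)) \<longlonglongrightarrow> 0"
    using s(1) assms(2) by auto
qed

lemma compact_map_zero: "compact_map (\<lambda>v. 0)"
  by (rule compact_mapI, rule exI[of _ id], rule exI[of _ 0]) (simp add: strict_mono_id)

lemma l2norm_add_le_sqrt:
  "u \<in> l2 \<Longrightarrow> v \<in> l2 \<Longrightarrow> l2norm (u + v) \<le> sqrt (2 * (l2norm u)\<^sup>2 + 2 * (l2norm v)\<^sup>2)"
  by (rule real_le_rsqrt) (rule power2_l2norm_add_le)

lemma l2norm_add_diff_tendsto_zero:
  assumes u: "\<And>n. u n \<in> l2" "w \<in> l2" "(\<lambda>n. l2norm (u n - w)) \<longlonglongrightarrow> 0"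
    and v: "\<And>n. v n \<in> l2" "z \<in> l2" "(\<lambda>n. l2norm (v n - z)) \<longlonglongrightarrow> 0"
  shows "(\<lambda>n. l2norm (u n + v n - (w + z))) \<longlonglongrightarrow> 0"
proof (rule Lim_null_comparison[OF always_eventually])
  have "(\<lambda>n. sqrt (2 * (l2norm (u n - w))\<^sup>2 + 2 * (l2norm (v n - z))\<^sup>2)) \<longlonglongrightarrow> sqrt (2 * 0\<^sup>2 + 2 * 0\<^sup>2)"
    by (intro tendsto_intros u(3) v(3))
  then show "(\<lambda>n. sqrt (2 * (l2norm (u n - w))\<^sup>2 + 2 * (l2norm (v n - z))\<^sup>2)) \<longlonglongrightarrow> 0"
    by simp
  show "\<forall>n. norm (l2norm (u n + v n - (w + z))) \<le> sqrt (2 * (l2norm (u n - w))\<^sup>2 + 2 * (l2norm (v n - z))\<^sup>2)"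
  proof
    fix n
    have eq: "u n + v n - (w + z) = (u n - w) + (v n - z)"
      by (simp add: fun_eq_iff)
    show "norm (l2norm (u n + v n - (w + z))) \<le> sqrt (2 * (l2norm (u n - w))\<^sup>2 + 2 * (l2norm (v n - z))\<^sup>2)"
      unfolding real_norm_def abs_of_nonneg[OF l2norm_nonneg] eq
      by (rule l2norm_add_le_sqrt[OF l2_diff[OF u(1) u(2)] l2_diff[OF v(1) v(2)]])
  qed
qed

lemma compact_map_add:
  assumes K1: "compact_map K1" and K2: "compact_map K2"
    and l2_K1: "\<And>v. v \<in> l2 \<Longrightarrow> K1 v \<in> l2" and l2_K2: "\<And>v. v \<in> l2 \<Longrightarrow> K2 v \<in> l2"
  shows "compact_map (\<lambda>v. K1 v + K2 v)"
proof (rule compact_mapI)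
  fix s :: "nat \<Rightarrow> nat \<Rightarrow> complex"
  assume s: "\<And>n. s n \<in> l2" "\<And>n. l2norm (s n) \<le> 1"
  obtain r1 w1 where r1: "strict_mono r1" "w1 \<in> l2" "(\<lambda>n. l2norm (K1 (s (r1 n)) - w1)) \<longlonglongrightarrow> 0"
    using K1 s by (rule compact_mapE)
  obtain r2 w2 where r2: "strict_mono r2" "w2 \<in> l2" "(\<lambda>n. l2norm (K2 ((s \<circ> r1) (r2 n)) - w2)) \<longlonglongrightarrow> 0"
    using compact_mapE[OF K2, of "s \<circ> r1"] s by auto
  have "(\<lambda>n. l2norm (K1 (s (r1 (r2 n))) - w1)) \<longlonglongrightarrow> 0"
    using LIMSEQ_subseq_LIMSEQ[OF r1(3) r2(1)] by (simp add: o_def)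
  then have "(\<lambda>n. l2norm (K1 (s (r1 (r2 n))) + K2 (s (r1 (r2 n))) - (w1 + w2))) \<longlonglongrightarrow> 0"
    using r1(2) r2 l2_K1 l2_K2 s(1) by (intro l2norm_add_diff_tendsto_zero) simp_all
  then show "\<exists>r w. strict_mono r \<and> w \<in> l2 \<and> (\<lambda>n. l2norm (K1 (s (r n)) + K2 (s (r n)) - w)) \<longlonglongrightarrow> 0"
    using strict_mono_o[OF r1(1) r2(1)] l2_add[OF r1(2) r2(2)]
    by (intro exI[of _ "r1 \<circ> r2"] exI[of _ "w1 + w2"]) simp
qed

lemma compact_map_sum:
  assumes "finite I" "\<And>i. i \<in> I \<Longrightarrow> compact_map (K i)"
    and "\<And>i v. i \<in> I \<Longrightarrow> v \<in> l2 \<Longrightarrow> K i v \<in> l2"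
  shows "compact_map (\<lambda>v. \<Sum>i\<in>I. K i v)"
  using assms
proof (induction I rule: finite_induct)
  case empty
  show ?case
    by (rule compact_map_cong[OF compact_map_zero]) (simp add: fun_eq_iff)
next
  case (insert i I)
  have "compact_map (\<lambda>v. K i v + (\<Sum>i\<in>I. K i v))"
  proof (rule compact_map_add)
    show "compact_map (\<lambda>v. \<Sum>i\<in>I. K i v)"
      using insert.IH insert.prems by blast
    show "(\<Sum>i\<in>I. K i v) \<in> l2" if "v \<in> l2" for v
      using insert.prems(2) that by (intro l2_sum[OF insert.hyps(1)]) blast
  qed (use insert.prems in blast)+
  then show ?case
    by (rule compact_map_cong) (simp add: insert.hyps fun_eq_iff)
qed

lemma compact_map_comp_left:
  assumes K: "compact_map K" and l2_K: "\<And>v. v \<in> l2 \<Longrightarrow> K v \<in> l2"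
    and l2_A: "\<And>z. z \<in> l2 \<Longrightarrow> A z \<in> l2"
    and A_diff: "\<And>u w. u \<in> l2 \<Longrightarrow> w \<in> l2 \<Longrightarrow> A (u - w) = A u - A w"
    and A_bound: "\<And>z. z \<in> l2 \<Longrightarrow> l2norm (A z) \<le> M * l2norm z"
  shows "compact_map (\<lambda>v. A (K v))"
proof (rule compact_mapI)
  fix s :: "nat \<Rightarrow> nat \<Rightarrow> complex"
  assume s: "\<And>n. s n \<in> l2" "\<And>n. l2norm (s n) \<le> 1"
  obtain r w where r: "strict_mono r" "w \<in> l2" "(\<lambda>n. l2norm (K (s (r n)) - w)) \<longlonglongrightarrow> 0"
    using K s by (rule compact_mapE)
  have le: "norm (l2norm (A (K (s (r n))) - A w)) \<le> M * l2norm (K (s (r n)) - w)" for n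
    using A_bound[OF l2_diff[OF l2_K[OF s(1)] r(2)]] A_diff[OF l2_K[OF s(1)] r(2)] by simp
  have "(\<lambda>n. M * l2norm (K (s (r n)) - w)) \<longlonglongrightarrow> M * 0"
    by (intro tendsto_intros r(3))
  then have "(\<lambda>n. l2norm (A (K (s (r n))) - A w)) \<longlonglongrightarrow> 0"
    using Lim_null_comparison[OF always_eventually[OF allI[OF le]]] by simp
  then show "\<exists>r w. strict_mono r \<and> w \<in> l2 \<and> (\<lambda>n. l2norm (A (K (s (r n))) - w)) \<longlonglongrightarrow> 0"
    using r(1,2) l2_A by (intro exI[of _ r] exI[of _ "A w"]) simp
qed

text \<open>The rescaling by \<open>1/M\<close> brings the image sequence back into the unit ball.\<close>
lemma compact_map_comp_right:
  assumes K: "compact_map K" and K_csc: "\<And>u c. u \<in> l2 \<Longrightarrow> K (csc c u) = csc c (K u)"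
    and l2_B: "\<And>z. z \<in> l2 \<Longrightarrow> B z \<in> l2"
    and B_bound: "\<And>z. z \<in> l2 \<Longrightarrow> l2norm (B z) \<le> M * l2norm z"
  shows "compact_map (\<lambda>v. K (B v))"
proof (rule compact_mapI)
  fix s :: "nat \<Rightarrow> nat \<Rightarrow> complex"
  assume s: "\<And>n. s n \<in> l2" "\<And>n. l2norm (s n) \<le> 1"
  define M' where "M' = max M 1"
  have M': "M' > 0" "M \<le> M'"
    by (simp_all add: M'_def)
  define t where "t n = csc (complex_of_real (1 / M')) (B (s n))" for n
  have "l2norm (B (s n)) \<le> M'" for n
  proof -
    have "l2norm (B (s n)) \<le> M' * l2norm (s n)"
      using B_bound[OF s(1), of n] mult_right_mono[OF M'(2) l2norm_nonneg[of "s n"]] by linarith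
    also have "\<dots> \<le> M'"
      using s(2)[of n] M'(1) mult_left_mono[of "l2norm (s n)" 1 M'] by simp
    finally show ?thesis .
  qed
  then have t: "t n \<in> l2" "l2norm (t n) \<le> 1" for n
    using M'(1) l2_B[OF s(1)] by (simp_all add: t_def l2_csc l2norm_csc norm_divide)
  obtain r w where r: "strict_mono r" "w \<in> l2" "(\<lambda>n. l2norm (K (t (r n)) - w)) \<longlonglongrightarrow> 0"
    using K t by (rule compact_mapE)
  have B_s: "B (s n) = csc (complex_of_real M') (t n)" for n
    using M'(1) by (simp add: t_def csc_csc)
  have "l2norm (K (B (s (r n))) - csc (complex_of_real M') w) = M' * l2norm (K (t (r n)) - w)" for n
    unfolding B_s K_csc[OF t(1)] csc_diff l2norm_csc using M'(1) by simp
  moreover have "(\<lambda>n. M' * l2norm (K (t (r n)) - w)) \<longlonglongrightarrow> M' * 0"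
    by (intro tendsto_intros r(3))
  ultimately have "(\<lambda>n. l2norm (K (B (s (r n))) - csc (complex_of_real M') w)) \<longlonglongrightarrow> 0"
    by simp
  then show "\<exists>r w. strict_mono r \<and> w \<in> l2 \<and> (\<lambda>n. l2norm (K (B (s (r n))) - w)) \<longlonglongrightarrow> 0"
    using r(1) l2_csc[OF r(2)] by (intro exI[of _ r] exI[of _ "csc (complex_of_real M') w"]) simp
qed

section \<open>Matrix entries of a conjugated operator\<close>

definition block_image :: "('b \<times> nat \<Rightarrow> 'a \<times> nat) \<Rightarrow> 'b \<Rightarrow> 'a set" where
  "block_image \<psi> y = range (\<lambda>m. fst (\<psi> (y, m)))"

lemma mem_block_image: "x \<in> block_image \<psi> y \<longleftrightarrow> (\<exists>m k. \<psi> (y, m) = (x, k))"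
  by (auto simp: block_image_def image_iff prod_eq_iff)

lemma block_image_inv:
  assumes "bij \<psi>"
  shows "y \<in> block_image (inv \<psi>) x \<longleftrightarrow> x \<in> block_image \<psi> y"
proof -
  have "inv \<psi> (x, k) = (y, m) \<longleftrightarrow> \<psi> (y, m) = (x, k)" for k m
    using assms by (metis bij_inv_eq_iff)
  then show ?thesis
    unfolding mem_block_image by blast
qed

text \<open>\<open>perm_block \<psi> y x\<close> is the \<open>(y, x)\<close> matrix entry of \<open>perm_op \<psi>\<close>; the entries of
  \<open>perm_op \<psi>\<close>'s adjoint are \<open>perm_block (inv \<psi>) x y\<close>.\<close>
definition perm_block :: "('b \<times> nat \<Rightarrow> 'a \<times> nat) \<Rightarrow> 'b \<Rightarrow> 'a \<Rightarrow> (nat \<Rightarrow> complex) \<Rightarrow> nat \<Rightarrow> complex" where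
  "perm_block \<psi> y x = compress {n. fst (\<psi> (y, n)) = x} (\<lambda>n. snd (\<psi> (y, n)))"

lemma inj_on_snd_block:
  assumes "inj g"
  shows "inj_on (\<lambda>n. snd (g (y, n))) {n. fst (g (y, n)) = x}"
proof (rule inj_onI)
  fix n n'
  assume "n \<in> {n. fst (g (y, n)) = x}" "n' \<in> {n. fst (g (y, n)) = x}" "snd (g (y, n)) = snd (g (y, n'))"
  then have "g (y, n) = g (y, n')"
    by (simp add: prod_eq_iff)
  then show "n = n'"
    using injD[OF assms] by blast
qed

lemma l2_perm_block: "inj \<psi> \<Longrightarrow> z \<in> l2 \<Longrightarrow> perm_block \<psi> y x z \<in> l2"
  and l2norm_perm_block_le: "inj \<psi> \<Longrightarrow> z \<in> l2 \<Longrightarrow> l2norm (perm_block \<psi> y x z) \<le> l2norm z"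
  unfolding perm_block_def by (rule l2_compress[OF inj_on_snd_block]; assumption)+

lemma perm_block_diff: "perm_block \<psi> y x (u - w) = perm_block \<psi> y x u - perm_block \<psi> y x w"
  by (simp add: perm_block_def compress_def fun_eq_iff)

lemma perm_block_zero [simp]: "perm_block \<psi> y x 0 = 0"
  by (simp add: perm_block_def compress_def fun_eq_iff)

lemma entry_conj_perm:
  assumes p: "bij \<psi>" and T: "T \<in> BOP" and w: "w \<in> l2"
    and fin: "finite (block_image \<psi> y)" "finite (block_image \<psi> y')"
  shows "entry (conj_perm \<psi> T) y y' w = (\<Sum>x\<in>block_image \<psi> y. \<Sum>x'\<in>block_image \<psi> y'.
    perm_block \<psi> y x (entry T x x' (perm_block (inv \<psi>) x' y' w)))"
proof
  fix n
  define u where "u = embed y' w \<circ> inv \<psi>"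
  have u: "u \<in> l2"
    unfolding u_def by (rule l2_comp_inv[OF p l2_embed[OF w]])
  have vanish: "u (x, k) = 0" if "x \<notin> block_image \<psi> y'" for x k
  proof (cases "inv \<psi> (x, k)")
    case (Pair y'' m)
    then have "\<psi> (y'', m) = (x, k)"
      using p by (metis bij_inv_eq_iff)
    then have "y'' \<noteq> y'"
      using that unfolding block_image_def by (metis fst_conv rangeI)
    then show ?thesis
      by (simp add: u_def embed_def Pair)
  qed
  have component_u: "component x' u = perm_block (inv \<psi>) x' y' w" for x'
    by (auto simp: fun_eq_iff component_def u_def perm_block_def compress_def embed_def
        split: prod.splits)
  obtain x0 n0 where xn: "\<psi> (y, n) = (x0, n0)"
    by fastforce
  have x0: "x0 \<in> block_image \<psi> y"
    using xn unfolding block_image_def by (metis fst_conv rangeI)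
  have "entry (conj_perm \<psi> T) y y' w n = component x0 (T u) n0"
    using w xn u by (simp add: entry_def conj_perm_def u_def component_def l2_embed)
  also have "\<dots> = (\<Sum>x'\<in>block_image \<psi> y'. entry T x0 x' (perm_block (inv \<psi>) x' y' w) n0)"
    using component_apply_eq_sum_entries[OF T u fin(2) vanish] by (simp add: component_u sum_apply_fun)
  also have "\<dots> = (\<Sum>x\<in>block_image \<psi> y.
      if x0 = x then \<Sum>x'\<in>block_image \<psi> y'. entry T x x' (perm_block (inv \<psi>) x' y' w) n0 else 0)"
    using x0 fin(1) by (simp add: sum.delta')
  also have "\<dots> = (\<Sum>x\<in>block_image \<psi> y. \<Sum>x'\<in>block_image \<psi> y'.
      perm_block \<psi> y x (entry T x x' (perm_block (inv \<psi>) x' y' w)) n)"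
    by (rule sum.cong) (simp_all add: perm_block_def compress_def xn)
  finally show "entry (conj_perm \<psi> T) y y' w n = (\<Sum>x\<in>block_image \<psi> y. \<Sum>x'\<in>block_image \<psi> y'.
      perm_block \<psi> y x (entry T x x' (perm_block (inv \<psi>) x' y' w))) n"
    by (simp add: sum_apply_fun)
qed

definition block_controlled :: "('b::metric_space \<times> nat \<Rightarrow> 'a::metric_space \<times> nat) \<Rightarrow> bool" where
  "block_controlled \<psi> \<longleftrightarrow> (\<forall>R. \<exists>R'. \<forall>y y' x x'. x \<in> block_image \<psi> y \<longrightarrow> x' \<in> block_image \<psi> y' \<longrightarrow>
     dist x x' \<le> R \<longrightarrow> dist y y' \<le> R')"

lemma compact_map_entry_conj_perm:
  assumes p: "bij \<psi>" and T: "T \<in> BOP" and compact: "\<And>x x'. compact_op (entry T x x')"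
    and fin: "finite (block_image \<psi> y)" "finite (block_image \<psi> y')"
  shows "compact_map (entry (conj_perm \<psi> T) y y')"
proof -
  have E: "entry T x x' \<in> BOP" "compact_map (entry T x x')" for x x'
    using compact[of x x'] by (simp_all add: compact_op_iff)
  have l2_term: "perm_block \<psi> y x (entry T x x' (perm_block (inv \<psi>) x' y' v)) \<in> l2" if "v \<in> l2" for x x' v
    using p that by (simp add: l2_perm_block BOP_l2[OF E(1)] bij_is_inj bij_imp_bij_inv)
  have "compact_map (\<lambda>v. perm_block \<psi> y x (entry T x x' (perm_block (inv \<psi>) x' y' v)))" for x x'
  proof (rule compact_map_comp_left[where A = "perm_block \<psi> y x" and M = 1
        and K = "\<lambda>v. entry T x x' (perm_block (inv \<psi>) x' y' v)"])
    show "compact_map (\<lambda>v. entry T x x' (perm_block (inv \<psi>) x' y' v))"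
      by (rule compact_map_comp_right[OF E(2), where B = "perm_block (inv \<psi>) x' y'" and M = 1])
        (simp_all add: BOP_csc[OF E(1)] p l2_perm_block l2norm_perm_block_le bij_is_inj bij_imp_bij_inv)
  qed (simp_all add: p l2_perm_block l2norm_perm_block_le perm_block_diff bij_is_inj bij_imp_bij_inv
      BOP_l2[OF E(1)])
  then have "compact_map (\<lambda>v. \<Sum>x\<in>block_image \<psi> y. \<Sum>x'\<in>block_image \<psi> y'.
      perm_block \<psi> y x (entry T x x' (perm_block (inv \<psi>) x' y' v)))"
    using fin l2_term by (intro compact_map_sum l2_sum) auto
  then show ?thesis
    by (rule compact_map_cong) (simp add: entry_conj_perm[OF p T _ fin])
qed

lemma conj_perm_alg_roe:
  assumes p: "bij \<psi>" and T: "T \<in> alg_roe"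
    and fin: "\<And>y. finite (block_image \<psi> y)" and ctrl: "block_controlled \<psi>"
  shows "conj_perm \<psi> T \<in> alg_roe"
proof -
  obtain R where R: "\<And>x x'. dist x x' > R \<Longrightarrow> entry T x x' = 0"
    and TB: "T \<in> BOP" and compact: "\<And>x x'. compact_op (entry T x x')"
    using T by (auto simp: alg_roe_def)
  obtain R' where R': "\<And>y y' x x'. x \<in> block_image \<psi> y \<Longrightarrow> x' \<in> block_image \<psi> y' \<Longrightarrow>
      dist x x' \<le> R \<Longrightarrow> dist y y' \<le> R'"
    using ctrl[unfolded block_controlled_def, rule_format, of R] by blast
  have propagation: "entry (conj_perm \<psi> T) y y' = 0" if "dist y y' > R'" for y y'
  proof
    fix w
    have zero: "entry T x x' = 0" if "x \<in> block_image \<psi> y" "x' \<in> block_image \<psi> y'" for x x'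
      using R'[OF that] \<open>dist y y' > R'\<close> by (intro R) linarith
    show "entry (conj_perm \<psi> T) y y' w = 0 w"
    proof (cases "w \<in> l2")
      case True
      show ?thesis
        unfolding entry_conj_perm[OF p TB True fin fin]
        by (simp add: zero)
    qed (simp add: entry_def)
  qed
  have "entry (conj_perm \<psi> T) y y' \<in> BOP" for y y'
    by (rule entry_BOP[OF conj_perm_BOP[OF p TB]])
  then show ?thesis
    using conj_perm_BOP[OF p TB] propagation compact_map_entry_conj_perm[OF p TB compact fin fin]
    by (auto simp: alg_roe_def compact_op_iff)
qed

lemma conj_perm_roe:
  assumes p: "bij \<psi>" and T: "T \<in> roe"
    and fin: "\<And>y. finite (block_image \<psi> y)" and ctrl: "block_controlled \<psi>"
  shows "conj_perm \<psi> T \<in> roe"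
proof -
  have "\<exists>S\<in>alg_roe. opnorm (conj_perm \<psi> T - S) < e" if "e > 0" for e
  proof -
    obtain S where S: "S \<in> alg_roe" "opnorm (T - S) < e"
      using T \<open>e > 0\<close> by (auto simp: roe_def)
    then show ?thesis
      using conj_perm_alg_roe[OF p S(1) fin ctrl]
      by (intro bexI[of _ "conj_perm \<psi> S"]) (simp_all add: conj_perm_diff[symmetric] opnorm_conj_perm[OF p])
  qed
  then show ?thesis
    using T conj_perm_BOP[OF p] by (simp add: roe_def)
qed

lemma opnorm_entry_conj_perm_le:
  fixes d :: real
  assumes p: "bij \<psi>" and T: "T \<in> BOP"
    and fin: "finite (block_image \<psi> y)" "finite (block_image \<psi> y')"
    and small: "\<And>x x'. x \<in> block_image \<psi> y \<Longrightarrow> opnorm (entry T x x') \<le> d" and d: "d \<ge> 0"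
  shows "opnorm (entry (conj_perm \<psi> T) y y')
    \<le> real (card (block_image \<psi> y)) * real (card (block_image \<psi> y')) * d"
proof (rule opnorm_least)
  fix w :: "nat \<Rightarrow> complex"
  assume w: "w \<in> l2"
  let ?term = "\<lambda>x x'. perm_block \<psi> y x (entry T x x' (perm_block (inv \<psi>) x' y' w))"
  have l2_inv_block: "perm_block (inv \<psi>) x' y' w \<in> l2" for x'
    using p w by (simp add: l2_perm_block bij_is_inj bij_imp_bij_inv)
  have l2_term: "?term x x' \<in> l2" for x x'
    using p by (simp add: l2_perm_block BOP_l2[OF entry_BOP[OF T] l2_inv_block] bij_is_inj)
  have term_le: "l2norm (?term x x') \<le> d * l2norm w" if "x \<in> block_image \<psi> y" for x x'
  proof -
    have "l2norm (?term x x') \<le> l2norm (entry T x x' (perm_block (inv \<psi>) x' y' w))"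
      using p by (simp add: l2norm_perm_block_le BOP_l2[OF entry_BOP[OF T] l2_inv_block] bij_is_inj)
    also have "\<dots> \<le> opnorm (entry T x x') * l2norm (perm_block (inv \<psi>) x' y' w)"
      by (rule l2norm_le_opnorm[OF entry_BOP[OF T] l2_inv_block])
    also have "\<dots> \<le> d * l2norm w"
      using small[OF that] d opnorm_nonneg[OF entry_BOP[OF T]] p w
      by (intro mult_mono) (simp_all add: l2norm_perm_block_le bij_is_inj bij_imp_bij_inv)
    finally show ?thesis .
  qed
  have row_le: "l2norm (\<Sum>x'\<in>block_image \<psi> y'. ?term x x') \<le> card (block_image \<psi> y') * (d * l2norm w)"
    if "x \<in> block_image \<psi> y" for x
    using fin(2) l2_term term_le[OF that] by (rule l2norm_sum_le)
  have "l2norm (\<Sum>x\<in>block_image \<psi> y. \<Sum>x'\<in>block_image \<psi> y'. ?term x x')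
      \<le> card (block_image \<psi> y) * (card (block_image \<psi> y') * (d * l2norm w))"
    by (rule l2norm_sum_le[OF fin(1)]) (simp_all add: l2_sum[OF fin(2)] l2_term row_le)
  then show "l2norm (entry (conj_perm \<psi> T) y y' w)
      \<le> real (card (block_image \<psi> y)) * real (card (block_image \<psi> y')) * d * l2norm w"
    by (simp add: entry_conj_perm[OF p T w fin] mult.assoc)
qed (use d in simp)

lemma fst_supp_eps_conj_perm_subset:
  assumes p: "bij \<psi>" and T: "T \<in> BOP" and e: "e > 0"
    and bound: "\<And>y. finite (block_image \<psi> y) \<and> card (block_image \<psi> y) \<le> N"
  obtains d where "d > 0"
    "fst ` supp_eps e (conj_perm \<psi> T) \<subseteq> {y. \<exists>x\<in>block_image \<psi> y. x \<in> fst ` supp_eps d T}"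
proof
  define d where "d = e / (real N * real N + 1)"
  have N: "real N * real N + 1 > 0"
    by (simp add: add_nonneg_pos)
  show d: "d > 0"
    using e N by (simp add: d_def)
  have "real N * real N * d < e"
    using e N by (simp add: d_def field_simps)
  show "fst ` supp_eps e (conj_perm \<psi> T) \<subseteq> {y. \<exists>x\<in>block_image \<psi> y. x \<in> fst ` supp_eps d T}"
  proof (rule subsetI, rule ccontr)
    fix y
    assume "y \<in> fst ` supp_eps e (conj_perm \<psi> T)"
    then obtain y' where y': "opnorm (entry (conj_perm \<psi> T) y y') \<ge> e"
      by (auto simp: supp_eps_def)
    assume not_near: "y \<notin> {y. \<exists>x\<in>block_image \<psi> y. x \<in> fst ` supp_eps d T}"
    have "opnorm (entry T x x') \<le> d" if "x \<in> block_image \<psi> y" for x x'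
    proof (rule ccontr)
      assume "\<not> opnorm (entry T x x') \<le> d"
      then have "(x, x') \<in> supp_eps d T"
        by (simp add: supp_eps_def)
      then have "x \<in> fst ` supp_eps d T"
        by (metis fst_conv image_eqI)
      then show False
        using not_near that by blast
    qed
    then have "opnorm (entry (conj_perm \<psi> T) y y')
        \<le> real (card (block_image \<psi> y)) * real (card (block_image \<psi> y')) * d"
      using bound d by (intro opnorm_entry_conj_perm_le[OF p T]) auto
    also have "\<dots> \<le> real N * real N * d"
    proof (rule mult_right_mono)
      show "real (card (block_image \<psi> y)) * real (card (block_image \<psi> y')) \<le> real N * real N"
        using bound[of y] bound[of y'] by (intro mult_mono) simp_all
    qed (use d in simp)
    finally show False
      using y' \<open>real N * real N * d < e\<close> by linarith
  qed
qed

section \<open>Ultrafilters and the coarse groupoid\<close>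

lemma ultra_inter: "ultra p \<Longrightarrow> A \<in> p \<Longrightarrow> B \<in> p \<Longrightarrow> A \<inter> B \<in> p"
  and ultra_mono: "ultra p \<Longrightarrow> A \<in> p \<Longrightarrow> A \<subseteq> B \<Longrightarrow> B \<in> p"
  and ultra_compl: "ultra p \<Longrightarrow> A \<notin> p \<Longrightarrow> - A \<in> p"
  and ultra_nonempty: "ultra p \<Longrightarrow> A \<in> p \<Longrightarrow> A \<noteq> {}"
  by (auto simp: ultra_def)

definition beta_open :: "'a set set set \<Rightarrow> bool" where
  "beta_open U \<longleftrightarrow> U \<subseteq> {p. ultra p} \<and> (\<forall>p\<in>U. \<exists>A\<in>p. {q. ultra q \<and> A \<in> q} \<subseteq> U)"

lemma beta_open_Int:
  assumes S: "beta_open S" and T: "beta_open T"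
  shows "beta_open (S \<inter> T)"
  unfolding beta_open_def
proof (intro conjI ballI)
  show "S \<inter> T \<subseteq> {p. ultra p}"
    using S by (auto simp: beta_open_def)
  fix p
  assume p: "p \<in> S \<inter> T"
  obtain A where A: "A \<in> p" "{q. ultra q \<and> A \<in> q} \<subseteq> S"
    using S p by (auto simp: beta_open_def)
  obtain B where B: "B \<in> p" "{q. ultra q \<and> B \<in> q} \<subseteq> T"
    using T p by (auto simp: beta_open_def)
  have "{q. ultra q \<and> A \<inter> B \<in> q} \<subseteq> S \<inter> T"
  proof
    fix q
    assume q: "q \<in> {q. ultra q \<and> A \<inter> B \<in> q}"
    then have "A \<in> q" "B \<in> q"
      using ultra_mono[of q "A \<inter> B"] by auto
    then show "q \<in> S \<inter> T"
      using q A(2) B(2) by blast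
  qed
  moreover have "A \<inter> B \<in> p"
    using S p A(1) B(1) by (auto simp: beta_open_def intro: ultra_inter)
  ultimately show "\<exists>C\<in>p. {q. ultra q \<and> C \<in> q} \<subseteq> S \<inter> T"
    by blast
qed

lemma beta_open_Union:
  assumes K: "\<forall>S\<in>K. beta_open S"
  shows "beta_open (\<Union>K)"
  unfolding beta_open_def
proof (intro conjI ballI)
  show "\<Union>K \<subseteq> {p. ultra p}"
    using K by (auto simp: beta_open_def)
  fix p
  assume "p \<in> \<Union>K"
  then obtain S where S: "S \<in> K" "p \<in> S"
    by blast
  then obtain A where "A \<in> p" "{q. ultra q \<and> A \<in> q} \<subseteq> S"
    using K unfolding beta_open_def by blast
  then show "\<exists>A\<in>p. {q. ultra q \<and> A \<in> q} \<subseteq> \<Union>K"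
    using S(1) by blast
qed

lemma openin_beta_top: "openin beta_top = beta_open"
proof -
  have "istopology beta_open"
    unfolding istopology_def using beta_open_Int beta_open_Union by blast
  then show ?thesis
    unfolding beta_top_def beta_open_def[abs_def, symmetric] by (rule topology_inverse')
qed

lemma openin_beta_top_basic: "openin beta_top {q. ultra q \<and> A \<in> q}"
  unfolding openin_beta_top beta_open_def by auto

lemma topspace_beta_top: "topspace beta_top = {p. ultra p}"
proof
  show "topspace beta_top \<subseteq> {p. ultra p}"
    using openin_topspace[of beta_top] unfolding openin_beta_top beta_open_def by blast
  show "{p. ultra p} \<subseteq> topspace beta_top"
    using openin_subset[OF openin_beta_top_basic[of UNIV]] by (auto simp: ultra_def)
qed

lemma ultra_principal: "ultra (principal x)"
  by (auto simp: ultra_def principal_def)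

lemma closure_of_principal_image: "beta_top closure_of (principal ` A) = {p. ultra p \<and> A \<in> p}"
proof (intro set_eqI iffI)
  fix p
  assume p: "p \<in> beta_top closure_of (principal ` A)"
  then have "ultra p"
    by (simp add: closure_of_def topspace_beta_top)
  moreover have "A \<in> p"
  proof (rule ccontr)
    assume "A \<notin> p"
    then have "p \<in> {q. ultra q \<and> - A \<in> q}"
      using \<open>ultra p\<close> ultra_compl by blast
    moreover have "\<forall>T. p \<in> T \<and> openin beta_top T \<longrightarrow> (\<exists>y\<in>principal ` A. y \<in> T)"
      using p by (simp add: closure_of_def)
    ultimately have "\<exists>y\<in>principal ` A. y \<in> {q. ultra q \<and> - A \<in> q}"
      using openin_beta_top_basic[of "- A"] by (simp only: simp_thms)
    then obtain a where "a \<in> A" "principal a \<in> {q. ultra q \<and> - A \<in> q}"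
      by blast
    then show False
      by (simp add: principal_def)
  qed
  ultimately show "p \<in> {p. ultra p \<and> A \<in> p}"
    by blast
next
  fix p
  assume p: "p \<in> {p. ultra p \<and> A \<in> p}"
  have "\<exists>y\<in>principal ` A. y \<in> T" if T: "p \<in> T" "openin beta_top T" for T
  proof -
    obtain B where B: "B \<in> p" "{q. ultra q \<and> B \<in> q} \<subseteq> T"
      using T unfolding openin_beta_top beta_open_def by blast
    have "A \<inter> B \<noteq> {}"
      using p B(1) ultra_inter ultra_nonempty by blast
    then obtain a where "a \<in> A" "a \<in> B"
      by blast
    then show ?thesis
      using B(2) ultra_principal[of a] by (auto simp: principal_def)
  qed
  then show "p \<in> beta_top closure_of (principal ` A)"
    using p by (simp add: closure_of_def topspace_beta_top)
qed

lemma ultra_umap: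
  assumes u: "ultra p"
  shows "ultra (umap h p)"
  unfolding ultra_def umap_def
proof (intro conjI ballI allI impI)
  show "{} \<notin> {B. h -` B \<in> p}" "UNIV \<in> {B. h -` B \<in> p}"
    using u by (simp_all add: ultra_def)
  show "A \<inter> B \<in> {B. h -` B \<in> p}" if "A \<in> {B. h -` B \<in> p}" "B \<in> {B. h -` B \<in> p}" for A B
    using that ultra_inter[OF u] by simp
  show "B \<in> {B. h -` B \<in> p}" if "A \<in> {B. h -` B \<in> p}" "A \<subseteq> B" for A B
    using that ultra_mono[OF u, of "h -` A" "h -` B"] by auto
  show "A \<in> {B. h -` B \<in> p} \<or> - A \<in> {B. h -` B \<in> p}" for A
    using ultra_compl[OF u, of "h -` A"] by (auto simp: vimage_Compl)
qed

lemma umap_comp: "umap (g \<circ> h) p = umap g (umap h p)"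
  by (simp add: umap_def vimage_comp)

lemma umap_id: "umap (\<lambda>x. x) p = p"
  by (simp add: umap_def)

lemma in_coarse_groupoid:
  assumes "ultra \<gamma>" "{(x, y). dist x y \<le> R} \<in> \<gamma>" "R \<ge> 0"
  shows "\<gamma> \<in> coarse_groupoid"
  using assms unfolding coarse_groupoid_def closure_of_principal_image by blast

text \<open>The groupoid element joining \<open>p\<close> to \<open>umap f ` U\<close> is the push-forward of \<open>p\<close> along the graph
  of a choice \<open>y \<mapsto> f (\<xi> y)\<close> of nearby points.\<close>
lemma closure_of_neighbourhood_subset_invariant:
  fixes f :: "'a \<Rightarrow> 'b::metric_space"
  assumes inv: "invariant V" and fUV: "umap f ` U \<subseteq> V"
    and A: "beta_top closure_of (principal ` A) \<subseteq> U" and C: "C \<ge> 0"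
    and B: "\<And>y. y \<in> B \<Longrightarrow> \<exists>x\<in>A. dist y (f x) \<le> C"
  shows "beta_top closure_of (principal ` B) \<subseteq> V"
proof
  fix p
  assume "p \<in> beta_top closure_of (principal ` B)"
  then have p: "ultra p" "B \<in> p"
    by (auto simp: closure_of_principal_image)
  obtain \<xi> where \<xi>: "\<And>y. y \<in> B \<Longrightarrow> \<xi> y \<in> A \<and> dist y (f (\<xi> y)) \<le> C"
    using B by metis
  define \<gamma> where "\<gamma> = umap (\<lambda>y. (y, f (\<xi> y))) p"
  have "B \<subseteq> (\<lambda>y. (y, f (\<xi> y))) -` {(x, y). dist x y \<le> C}"
    using \<xi> by auto
  then have "{(x, y). dist x y \<le> C} \<in> \<gamma>"
    using p ultra_mono by (auto simp: \<gamma>_def umap_def)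
  then have \<gamma>: "\<gamma> \<in> coarse_groupoid"
    using in_coarse_groupoid ultra_umap[OF p(1)] C by (auto simp: \<gamma>_def)
  have "A \<in> umap \<xi> p"
    using p \<xi> ultra_mono[of p B "\<xi> -` A"] by (auto simp: umap_def)
  then have "umap \<xi> p \<in> U"
    using A ultra_umap[OF p(1)] by (auto simp: closure_of_principal_image)
  moreover have "umap snd \<gamma> = umap f (umap \<xi> p)"
    by (simp add: \<gamma>_def umap_comp[symmetric] o_def)
  ultimately have "umap snd \<gamma> \<in> V"
    using fUV by auto
  moreover have "umap fst \<gamma> = p"
    by (simp add: \<gamma>_def umap_comp[symmetric] o_def umap_id)
  ultimately show "p \<in> V"
    using inv \<gamma> unfolding invariant_def by blast
qed

lemma supported_in_conj_perm:
  fixes \<psi> :: "'b::metric_space \<times> nat \<Rightarrow> 'a::metric_space \<times> nat" and f :: "'a \<Rightarrow> 'b"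
  assumes p: "bij \<psi>" and T: "T \<in> BOP" and supp: "supported_in U T"
    and bound: "\<And>y. finite (block_image \<psi> y) \<and> card (block_image \<psi> y) \<le> N"
    and close: "\<And>x y. x \<in> block_image \<psi> y \<Longrightarrow> dist y (f x) \<le> C" and C: "C \<ge> 0"
    and inv: "invariant V" and fUV: "umap f ` U \<subseteq> V"
  shows "supported_in V (conj_perm \<psi> T)"
  unfolding supported_in_def
proof (intro allI impI)
  fix e :: real
  assume "e > 0"
  then obtain d where d: "d > 0"
    and rows: "fst ` supp_eps e (conj_perm \<psi> T) \<subseteq> {y. \<exists>x\<in>block_image \<psi> y. x \<in> fst ` supp_eps d T}"
    using fst_supp_eps_conj_perm_subset[OF p T _ bound] by blast
  have "beta_top closure_of (principal ` fst ` supp_eps d T) \<subseteq> U"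
    using supp d by (simp add: supported_in_def)
  moreover have "\<exists>x\<in>fst ` supp_eps d T. dist y (f x) \<le> C" if "y \<in> fst ` supp_eps e (conj_perm \<psi> T)" for y
    using rows that close by blast
  ultimately show "beta_top closure_of (principal ` fst ` supp_eps e (conj_perm \<psi> T)) \<subseteq> V"
    using closure_of_neighbourhood_subset_invariant[OF inv fUV _ C] by blast
qed

section \<open>Bijections close to a coarse equivalence\<close>

lemma covers_perm_op:
  assumes C: "C \<ge> 0" and close: "\<And>x y. x \<in> block_image \<psi> y \<Longrightarrow> dist y (f x) \<le> C"
  shows "covers (perm_op \<psi>) f"
  unfolding covers_def
proof (intro exI[of _ C] conjI allI impI)
  fix x y
  assume far: "dist y (f x) > C"
  show "entry (perm_op \<psi>) y x = 0"
  proof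
    fix w
    have off_block: "fst (\<psi> (y, n)) \<noteq> x" for n
    proof
      assume "fst (\<psi> (y, n)) = x"
      then have "x \<in> block_image \<psi> y"
        unfolding block_image_def by (metis rangeI)
      then show False
        using close far by fastforce
    qed
    have "perm_op \<psi> (embed x w) (y, n) = 0" if "w \<in> l2" for n
    proof -
      obtain a k where ak: "\<psi> (y, n) = (a, k)"
        by fastforce
      then have "a \<noteq> x"
        using off_block[of n] by simp
      then show ?thesis
        using that ak by (simp add: perm_op_def l2_embed embed_def)
    qed
    then show "entry (perm_op \<psi>) y x w = 0 w"
      by (simp add: entry_def fun_eq_iff)
  qed
qed (rule C)

lemma fibrewise_bij:
  fixes P :: "'c \<Rightarrow> 'i" and Q :: "'d \<Rightarrow> 'i"
  assumes cP: "\<And>i. countable {a. P a = i}" and iP: "\<And>i. infinite {a. P a = i}"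
    and cQ: "\<And>i. countable {b. Q b = i}" and iQ: "\<And>i. infinite {b. Q b = i}"
  obtains h where "bij h" "\<And>a. Q (h a) = P a"
proof
  define eP where "eP i = from_nat_into {a. P a = i}" for i
  define eQ where "eQ i = from_nat_into {b. Q b = i}" for i
  have bP: "bij_betw (eP i) UNIV {a. P a = i}" for i
    unfolding eP_def by (rule bij_betw_from_nat_into[OF cP iP])
  have bQ: "bij_betw (eQ i) UNIV {b. Q b = i}" for i
    unfolding eQ_def by (rule bij_betw_from_nat_into[OF cQ iQ])
  define h where "h a = eQ (P a) (inv_into UNIV (eP (P a)) a)" for a
  show Qh: "Q (h a) = P a" for a
    using bij_betw_apply[OF bQ[of "P a"]] by (simp add: h_def)
  have "inj h"
  proof (rule injI)
    fix a a'
    assume eq: "h a = h a'"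
    then have "P a = P a'"
      using Qh by metis
    with eq have "inv_into UNIV (eP (P a)) a = inv_into UNIV (eP (P a)) a'"
      using bij_betw_imp_inj_on[OF bQ[of "P a"]] by (auto simp: h_def dest: injD)
    then show "a = a'"
      using bij_betw_inv_into_right[OF bP[of "P a"], of a] bij_betw_inv_into_right[OF bP[of "P a"], of a']
        \<open>P a = P a'\<close> by simp
  qed
  moreover have "b \<in> range h" for b
  proof -
    obtain n where n: "eQ (Q b) n = b"
      using bij_betw_imp_surj_on[OF bQ[of "Q b"]] by (metis (mono_tags) imageE mem_Collect_eq)
    have Pa: "P (eP (Q b) n) = Q b"
      using bij_betw_apply[OF bP[of "Q b"]] by simp
    have "inv_into UNIV (eP (Q b)) (eP (Q b) n) = n"
      by (rule bij_betw_inv_into_left[OF bP]) simp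
    then have "h (eP (Q b) n) = b"
      by (simp add: h_def Pa n)
    then show ?thesis
      by (metis rangeI)
  qed
  ultimately show "bij h"
    by (auto simp: bij_def)
qed

lemma countable_infinite_fibre_case_sum:
  fixes h1 :: "'a \<Rightarrow> 'c" and h2 :: "'b \<Rightarrow> 'c"
  defines "Q \<equiv> case_sum (\<lambda>a. h1 (fst a)) (\<lambda>b. h2 (fst b)) :: ('a \<times> nat) + ('b \<times> nat) \<Rightarrow> 'c"
  assumes fin: "finite {a. h1 a = z}" "finite {b. h2 b = z}" and hit: "z \<in> range h1 \<union> range h2"
  shows "countable {s. Q s = z}" and "infinite {s. Q s = z}"
proof -
  have fibre: "{s. Q s = z} = Inl ` ({a. h1 a = z} \<times> UNIV) \<union> Inr ` ({b. h2 b = z} \<times> UNIV)"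
  proof (rule set_eqI)
    show "s \<in> {s. Q s = z} \<longleftrightarrow> s \<in> Inl ` ({a. h1 a = z} \<times> UNIV) \<union> Inr ` ({b. h2 b = z} \<times> UNIV)" for s
      by (cases s) (auto simp: Q_def)
  qed
  show "countable {s. Q s = z}"
    unfolding fibre using fin by (auto intro: countable_finite)
  have "infinite ({a} \<times> (UNIV :: nat set))" for a :: 'z
    by (simp add: finite_cartesian_product_iff)
  then have "infinite (Inl ` ({a. h1 a = z} \<times> (UNIV :: nat set)) :: (('a \<times> nat) + ('b \<times> nat)) set)
      \<or> infinite (Inr ` ({b. h2 b = z} \<times> (UNIV :: nat set)) :: (('a \<times> nat) + ('b \<times> nat)) set)"
    using hit by (auto dest!: finite_imageD simp: inj_on_def finite_cartesian_product_iff)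
  then show "infinite {s. Q s = z}"
    unfolding fibre by auto
qed

text \<open>Both \<open>X \<times> \<nat>\<close> and \<open>Y \<times> \<nat>\<close> are matched fibrewise with \<open>(X \<times> \<nat>) + (Y \<times> \<nat>)\<close>, fibred over
  \<open>X\<close> by \<open>(x, n) \<mapsto> x\<close>, \<open>(y, n) \<mapsto> g y\<close> and over \<open>Y\<close> by \<open>(x, n) \<mapsto> f x\<close>, \<open>(y, n) \<mapsto> y\<close>. All these fibres
  are countably infinite because \<open>f\<close> and \<open>g\<close> have finite fibres. In the composite bijection,
  \<open>\<psi> (y, m) = (x, k)\<close> forces \<open>y = f x\<close> or \<open>x = g y\<close>.\<close>
lemma exists_bij_close:
  fixes f :: "'a \<Rightarrow> 'b::metric_space" and g :: "'b \<Rightarrow> 'a"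
  assumes fin_g: "\<And>x. finite {y. g y = x}" and fin_f: "\<And>y. finite {x. f x = y}"
    and C: "\<And>y. dist (f (g y)) y \<le> C"
  obtains \<psi> :: "'b \<times> nat \<Rightarrow> 'a \<times> nat"
  where "bij \<psi>" "\<And>x y. x \<in> block_image \<psi> y \<Longrightarrow> dist y (f x) \<le> C"
proof -
  define Q :: "('a \<times> nat) + ('b \<times> nat) \<Rightarrow> 'a" where "Q = case_sum (\<lambda>a. fst a) (\<lambda>b. g (fst b))"
  define Q' :: "('a \<times> nat) + ('b \<times> nat) \<Rightarrow> 'b" where "Q' = case_sum (\<lambda>a. f (fst a)) (\<lambda>b. fst b)"
  have line: "{a :: 'z \<times> nat. fst a = z} = {z} \<times> UNIV" "infinite ({z} \<times> (UNIV :: nat set))" for z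
    by (auto simp: finite_cartesian_product_iff)
  obtain \<alpha> :: "'a \<times> nat \<Rightarrow> ('a \<times> nat) + ('b \<times> nat)" where \<alpha>: "bij \<alpha>" "\<And>a. Q (\<alpha> a) = fst a"
  proof (rule fibrewise_bij)
    show "countable {a :: 'a \<times> nat. fst a = x}" "infinite {a :: 'a \<times> nat. fst a = x}" for x
      unfolding line(1) using line(2) by simp_all
    show "countable {s. Q s = x}" "infinite {s. Q s = x}" for x
      unfolding Q_def by (rule countable_infinite_fibre_case_sum; simp add: fin_g)+
  qed (rule that)
  obtain \<beta> :: "'b \<times> nat \<Rightarrow> ('a \<times> nat) + ('b \<times> nat)" where \<beta>: "bij \<beta>" "\<And>b. Q' (\<beta> b) = fst b"
  proof (rule fibrewise_bij)
    show "countable {b :: 'b \<times> nat. fst b = y}" "infinite {b :: 'b \<times> nat. fst b = y}" for y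
      unfolding line(1) using line(2) by simp_all
    show "countable {s. Q' s = y}" "infinite {s. Q' s = y}" for y
      unfolding Q'_def by (rule countable_infinite_fibre_case_sum; simp add: fin_f)+
  qed (rule that)
  show ?thesis
  proof
    show "bij (inv \<alpha> \<circ> \<beta>)"
      using \<alpha>(1) \<beta>(1) by (simp add: bij_comp bij_imp_bij_inv)
    fix x y
    assume "x \<in> block_image (inv \<alpha> \<circ> \<beta>) y"
    then obtain m k where "inv \<alpha> (\<beta> (y, m)) = (x, k)"
      by (auto simp: mem_block_image)
    then have s: "\<alpha> (x, k) = \<beta> (y, m)"
      using \<alpha>(1) by (metis bij_inv_eq_iff)
    have "C \<ge> 0"
      using C[of y] zero_le_dist order_trans by blast
    then show "dist y (f x) \<le> C"
      using \<alpha>(2)[of "(x, k)"] \<beta>(2)[of "(y, m)"] C[of y]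
      by (cases "\<beta> (y, m)") (auto simp: s Q_def Q'_def dist_commute)
  qed
qed

lemma bounded_geometry_ball:
  assumes "bounded_geometry (UNIV :: 'a::metric_space set)"
  obtains N where "\<And>x :: 'a. finite {y. dist x y \<le> R}" "\<And>x :: 'a. card {y. dist x y \<le> R} \<le> N"
  using assms[unfolded bounded_geometry_def, simplified, rule_format, of R] by blast

lemma coarse_equivalence_bornologous: "coarse_equivalence f \<Longrightarrow> bornologous f"
  by (simp add: coarse_equivalence_def)

lemma bornologousE:
  assumes "bornologous f"
  obtains S where "\<And>x y. dist x y \<le> R \<Longrightarrow> dist (f x) (f y) \<le> S"
  using assms unfolding bornologous_def by blast

lemma coarse_equivalence_close_bij:
  fixes f :: "'a::metric_space \<Rightarrow> 'b::metric_space"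
  assumes bgX: "bounded_geometry (UNIV :: 'a set)" and bgY: "bounded_geometry (UNIV :: 'b set)"
    and ce: "coarse_equivalence f"
  obtains \<psi> :: "'b \<times> nat \<Rightarrow> 'a \<times> nat" and C
  where "bij \<psi>" "C \<ge> 0" "\<And>x y. x \<in> block_image \<psi> y \<Longrightarrow> dist y (f x) \<le> C"
proof -
  obtain g C1 C2 where "bornologous g" and gf: "\<And>x. dist (g (f x)) x \<le> C1"
    and fg: "\<And>y. dist (f (g y)) y \<le> C2"
    using ce unfolding coarse_equivalence_def by blast
  have fin_g: "finite {y. g y = x}" for x
    using bounded_geometry_ball[OF bgY, of C2] fg by (auto intro: finite_subset[of _ "{y. dist (f x) y \<le> C2}"])
  have fin_f: "finite {x. f x = y}" for y
    using bounded_geometry_ball[OF bgX, of C1] gf by (auto intro: finite_subset[of _ "{x. dist (g y) x \<le> C1}"])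
  obtain \<psi> :: "'b \<times> nat \<Rightarrow> 'a \<times> nat"
    where "bij \<psi>" "\<And>x y. x \<in> block_image \<psi> y \<Longrightarrow> dist y (f x) \<le> C2"
    using exists_bij_close[OF fin_g fin_f fg] by blast
  moreover have "C2 \<ge> 0"
    using fg zero_le_dist order_trans by blast
  ultimately show ?thesis
    using that by blast
qed

lemma block_image_card_le:
  fixes f :: "'a::metric_space \<Rightarrow> 'b::metric_space"
  assumes bgX: "bounded_geometry (UNIV :: 'a set)" and ce: "coarse_equivalence f"
    and close: "\<And>x y. x \<in> block_image \<psi> y \<Longrightarrow> dist y (f x) \<le> C"
  obtains N where "\<And>y. finite (block_image \<psi> y) \<and> card (block_image \<psi> y) \<le> N"
proof -
  obtain g C1 C2 where bg: "bornologous g" and gf: "\<And>x. dist (g (f x)) x \<le> C1"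
    and "\<And>y. dist (f (g y)) y \<le> C2"
    using ce unfolding coarse_equivalence_def by blast
  obtain S where S: "\<And>y y'. dist y y' \<le> C \<Longrightarrow> dist (g y) (g y') \<le> S"
    using bornologousE[OF bg, of C] by blast
  obtain N where N: "\<And>z :: 'a. finite {x. dist z x \<le> C1 + S}" "\<And>z :: 'a. card {x. dist z x \<le> C1 + S} \<le> N"
    using bounded_geometry_ball[OF bgX, of "C1 + S"] by blast
  have sub: "block_image \<psi> y \<subseteq> {x. dist (g y) x \<le> C1 + S}" for y
  proof
    fix x
    assume "x \<in> block_image \<psi> y"
    then have "dist (g y) (g (f x)) \<le> S"
      by (rule S[OF close])
    then show "x \<in> {x. dist (g y) x \<le> C1 + S}"
      using dist_triangle[of "g y" x "g (f x)"] gf[of x] by simp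
  qed
  show ?thesis
  proof (rule that)
    fix y
    show "finite (block_image \<psi> y) \<and> card (block_image \<psi> y) \<le> N"
      using finite_subset[OF sub N(1)] card_mono[OF N(1) sub, of y] N(2)[of "g y"] by simp
  qed
qed

lemma finite_block_image_inv:
  assumes bgY: "bounded_geometry (UNIV :: 'b::metric_space set)" and p: "bij \<psi>"
    and close: "\<And>x (y :: 'b). x \<in> block_image \<psi> y \<Longrightarrow> dist y (f x) \<le> C"
  shows "finite (block_image (inv \<psi>) x)"
proof (rule finite_subset)
  show "block_image (inv \<psi>) x \<subseteq> {y. dist (f x) y \<le> C}"
    using close by (auto simp: block_image_inv[OF p] dist_commute)
  show "finite {y. dist (f x) y \<le> C}"
    using bgY by (rule bounded_geometry_ball)
qed

lemma block_controlled_close: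
  assumes bf: "bornologous f" and close: "\<And>x y. x \<in> block_image \<psi> y \<Longrightarrow> dist y (f x) \<le> C"
  shows "block_controlled \<psi>"
  unfolding block_controlled_def
proof
  fix R
  obtain S where S: "\<And>x x'. dist x x' \<le> R \<Longrightarrow> dist (f x) (f x') \<le> S"
    using bornologousE[OF bf, of R] by blast
  have "dist y y' \<le> 2 * C + S"
    if "x \<in> block_image \<psi> y" "x' \<in> block_image \<psi> y'" "dist x x' \<le> R" for y y' x x'
    using close[OF that(1)] close[OF that(2)] S[OF that(3)]
      dist_triangle[of y y' "f x"] dist_triangle[of "f x" y' "f x'"]
    by (simp add: dist_commute)
  then show "\<exists>R'. \<forall>y y' x x'. x \<in> block_image \<psi> y \<longrightarrow> x' \<in> block_image \<psi> y' \<longrightarrow>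
      dist x x' \<le> R \<longrightarrow> dist y y' \<le> R'"
    by blast
qed

lemma block_controlled_inv_close:
  assumes p: "bij \<psi>" and ce: "coarse_equivalence f"
    and close: "\<And>x y. x \<in> block_image \<psi> y \<Longrightarrow> dist y (f x) \<le> C"
  shows "block_controlled (inv \<psi>)"
  unfolding block_controlled_def
proof
  fix R
  obtain g C1 C2 where bg: "bornologous g" and gf: "\<And>x. dist (g (f x)) x \<le> C1"
    and "\<And>y. dist (f (g y)) y \<le> C2"
    using ce unfolding coarse_equivalence_def by blast
  obtain S where S: "\<And>z z'. dist z z' \<le> R + 2 * C \<Longrightarrow> dist (g z) (g z') \<le> S"
    using bornologousE[OF bg, of "R + 2 * C"] by blast
  have "dist x x' \<le> 2 * C1 + S"
    if "y \<in> block_image (inv \<psi>) x" "y' \<in> block_image (inv \<psi>) x'" "dist y y' \<le> R" for x x' y y'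
  proof -
    have "dist y (f x) \<le> C" "dist y' (f x') \<le> C"
      using that(1,2) close by (simp_all add: block_image_inv[OF p])
    then have "dist (f x) (f x') \<le> R + 2 * C"
      using that(3) dist_triangle[of "f x" "f x'" y] dist_triangle[of y "f x'" y']
      by (simp add: dist_commute)
    then show ?thesis
      using S gf[of x] gf[of x'] dist_triangle[of x x' "g (f x)"] dist_triangle[of "g (f x)" x' "g (f x')"]
      by (simp add: dist_commute) (smt (verit))
  qed
  then show "\<exists>R'. \<forall>x x' y y'. y \<in> block_image (inv \<psi>) x \<longrightarrow> y' \<in> block_image (inv \<psi>) x' \<longrightarrow>
      dist y y' \<le> R \<longrightarrow> dist x x' \<le> R'"
    by blast
qed

lemma conj_perm_roe_close:
  fixes f :: "'a::metric_space \<Rightarrow> 'b::metric_space" and \<psi> :: "'b \<times> nat \<Rightarrow> 'a \<times> nat"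
  assumes bgX: "bounded_geometry (UNIV :: 'a set)" and ce: "coarse_equivalence f" and p: "bij \<psi>"
    and close: "\<And>x y. x \<in> block_image \<psi> y \<Longrightarrow> dist y (f x) \<le> C"
    and T: "T \<in> roe"
  shows "conj_perm \<psi> T \<in> roe"
proof -
  obtain N where "\<And>y. finite (block_image \<psi> y) \<and> card (block_image \<psi> y) \<le> N"
    using block_image_card_le[OF bgX ce close] by blast
  moreover have "block_controlled \<psi>"
    using ce close by (intro block_controlled_close[OF coarse_equivalence_bornologous])
  ultimately show ?thesis
    using conj_perm_roe[OF p T] by blast
qed

lemma conj_perm_inv_roe_close:
  fixes f :: "'a::metric_space \<Rightarrow> 'b::metric_space" and \<psi> :: "'b \<times> nat \<Rightarrow> 'a \<times> nat"
  assumes bgY: "bounded_geometry (UNIV :: 'b set)" and ce: "coarse_equivalence f" and p: "bij \<psi>"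
    and close: "\<And>x y. x \<in> block_image \<psi> y \<Longrightarrow> dist y (f x) \<le> C"
    and T: "T \<in> roe"
  shows "conj_perm (inv \<psi>) T \<in> roe"
  by (intro conj_perm_roe T bij_imp_bij_inv[OF p] finite_block_image_inv[OF bgY p close]
      block_controlled_inv_close[OF p ce close])

lemma supported_in_conj_perm_close:
  fixes f :: "'a::metric_space \<Rightarrow> 'b::metric_space" and \<psi> :: "'b \<times> nat \<Rightarrow> 'a \<times> nat"
  assumes bgX: "bounded_geometry (UNIV :: 'a set)" and ce: "coarse_equivalence f" and p: "bij \<psi>"
    and close: "\<And>x y. x \<in> block_image \<psi> y \<Longrightarrow> dist y (f x) \<le> C" and C: "C \<ge> 0"
    and inv: "invariant V" and fUV: "umap f ` U \<subseteq> V"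
    and T: "T \<in> BOP" "supported_in U T"
  shows "supported_in V (conj_perm \<psi> T)"
proof -
  obtain N where "\<And>y. finite (block_image \<psi> y) \<and> card (block_image \<psi> y) \<le> N"
    using block_image_card_le[OF bgX ce close] by blast
  then show ?thesis
    using supported_in_conj_perm[OF p T _ close C inv fUV] by blast
qed

lemma conj_perm_generators_close:
  fixes f :: "'a::metric_space \<Rightarrow> 'b::metric_space" and \<psi> :: "'b \<times> nat \<Rightarrow> 'a \<times> nat"
  assumes bgX: "bounded_geometry (UNIV :: 'a set)" and ce: "coarse_equivalence f" and p: "bij \<psi>"
    and close: "\<And>x y. x \<in> block_image \<psi> y \<Longrightarrow> dist y (f x) \<le> C" and C: "C \<ge> 0"
    and inv: "invariant V" and fUV: "umap f ` U \<subseteq> V"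
  shows "conj_perm \<psi> ` {T \<in> alg_roe. supported_in U T} \<subseteq> {T \<in> alg_roe. supported_in V T}"
proof (rule image_subsetI)
  fix T
  assume T: "T \<in> {T \<in> alg_roe. supported_in U T}"
  obtain N where "\<And>y. finite (block_image \<psi> y) \<and> card (block_image \<psi> y) \<le> N"
    using block_image_card_le[OF bgX ce close] by blast
  moreover have "block_controlled \<psi>"
    using ce close by (intro block_controlled_close[OF coarse_equivalence_bornologous])
  ultimately have "conj_perm \<psi> T \<in> alg_roe"
    using conj_perm_alg_roe[OF p] T by blast
  moreover have "supported_in V (conj_perm \<psi> T)"
    using supported_in_conj_perm_close[OF bgX ce p close C inv fUV] T by (simp add: alg_roe_def)
  ultimately show "conj_perm \<psi> T \<in> {T \<in> alg_roe. supported_in V T}"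
    by blast
qed

section \<open>Ideals\<close>

lemma roe_BOP: "T \<in> roe \<Longrightarrow> T \<in> BOP"
  by (simp add: roe_def)

lemma alg_roe_roe:
  assumes "T \<in> alg_roe"
  shows "T \<in> roe"
proof -
  have "T \<in> BOP" "T - T = 0"
    using assms by (simp_all add: alg_roe_def)
  then show ?thesis
    unfolding roe_def using assms by (auto intro!: bexI[of _ T])
qed

lemma closed_ideal_inD:
  assumes "closed_ideal_in A I"
  shows "I \<subseteq> A" "0 \<in> I" "\<And>S T. S \<in> I \<Longrightarrow> T \<in> I \<Longrightarrow> S + T \<in> I"
    "\<And>c S. S \<in> I \<Longrightarrow> (\<lambda>v. csc c (S v)) \<in> I"
    "\<And>a S. a \<in> A \<Longrightarrow> S \<in> I \<Longrightarrow> a \<circ> S \<in> I" "\<And>a S. a \<in> A \<Longrightarrow> S \<in> I \<Longrightarrow> S \<circ> a \<in> I"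
    "\<And>T. T \<in> A \<Longrightarrow> (\<forall>\<epsilon>>0. \<exists>S\<in>I. opnorm (T - S) < \<epsilon>) \<Longrightarrow> T \<in> I"
  using assms unfolding closed_ideal_in_def by blast+

lemma roe_if_conj_perm_roe:
  assumes "bij \<psi>" and "\<And>T. T \<in> roe \<Longrightarrow> conj_perm (inv \<psi>) T \<in> roe"
    and "\<And>v. v \<notin> l2 \<Longrightarrow> S v = 0" and "conj_perm \<psi> S \<in> roe"
  shows "S \<in> roe"
  using assms by (metis conj_perm_inv)

lemma closed_ideal_in_conj_perm_preimage:
  fixes \<psi> :: "'b::metric_space \<times> nat \<Rightarrow> 'a::metric_space \<times> nat"
  assumes p: "bij \<psi>"
    and conj_roe: "\<And>T. T \<in> roe \<Longrightarrow> conj_perm \<psi> T \<in> roe"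
    and conj_inv_roe: "\<And>T. T \<in> roe \<Longrightarrow> conj_perm (inv \<psi>) T \<in> roe"
    and K: "closed_ideal_in roe K"
  shows "closed_ideal_in roe {S \<in> roe. conj_perm \<psi> S \<in> K}"
proof -
  note K_roe = closed_ideal_inD(1)[OF K] and K_zero = closed_ideal_inD(2)[OF K]
    and K_add = closed_ideal_inD(3)[OF K] and K_csc = closed_ideal_inD(4)[OF K]
    and K_mult = closed_ideal_inD(5,6)[OF K] and K_closed = closed_ideal_inD(7)[OF K]
  have preimage: "S \<in> {S \<in> roe. conj_perm \<psi> S \<in> K}"
    if "\<And>v. v \<notin> l2 \<Longrightarrow> S v = 0" and SK: "conj_perm \<psi> S \<in> K" for S
    using roe_if_conj_perm_roe[OF p conj_inv_roe that(1) subsetD[OF K_roe SK]] SK by simp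
  show ?thesis
    unfolding closed_ideal_in_def
  proof (intro conjI ballI allI impI)
    show "0 \<in> {S \<in> roe. conj_perm \<psi> S \<in> K}"
      by (rule preimage) (simp_all add: conj_perm_zero K_zero)
  next
    fix S T
    assume "S \<in> {S \<in> roe. conj_perm \<psi> S \<in> K}" "T \<in> {S \<in> roe. conj_perm \<psi> S \<in> K}"
    then show "S + T \<in> {S \<in> roe. conj_perm \<psi> S \<in> K}"
      by (intro preimage) (auto simp: BOP_out roe_BOP conj_perm_add K_add)
  next
    fix c S
    assume S: "S \<in> {S \<in> roe. conj_perm \<psi> S \<in> K}"
    have "conj_perm \<psi> (\<lambda>v. csc c (S v)) \<in> K"
      using S K_csc by (simp add: conj_perm_csc)
    moreover have "csc c (S v) = 0" if "v \<notin> l2" for v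
      using BOP_out[OF roe_BOP that] S by (simp only: mem_Collect_eq csc_zero)
    ultimately show "(\<lambda>v. csc c (S v)) \<in> {S \<in> roe. conj_perm \<psi> S \<in> K}"
      by (intro preimage)
  next
    fix a S :: "('a \<times> nat \<Rightarrow> complex) \<Rightarrow> ('a \<times> nat \<Rightarrow> complex)"
    assume a: "a \<in> roe" and S: "S \<in> {S \<in> roe. conj_perm \<psi> S \<in> K}"
    then have BOPs: "a \<in> BOP" "S \<in> BOP"
      by (simp_all add: roe_BOP)
    have "conj_perm \<psi> (a \<circ> S) \<in> K" "conj_perm \<psi> (S \<circ> a) \<in> K"
      using K_mult[OF conj_roe[OF a]] S by (simp_all add: conj_perm_comp[OF p BOPs] conj_perm_comp[OF p BOPs(2,1)])
    moreover have "(a \<circ> S) v = 0" "(S \<circ> a) v = 0" if "v \<notin> l2" for v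
      using BOP_out[OF BOPs(1) that] BOP_out[OF BOPs(2) that] BOP_zero[OF BOPs(1)] BOP_zero[OF BOPs(2)]
      by simp_all
    ultimately show "a \<circ> S \<in> {S \<in> roe. conj_perm \<psi> S \<in> K}" "S \<circ> a \<in> {S \<in> roe. conj_perm \<psi> S \<in> K}"
      using preimage[of "a \<circ> S"] preimage[of "S \<circ> a"] by simp_all
  next
    fix T
    assume T: "T \<in> roe" and approx: "\<forall>\<epsilon>>0. \<exists>S\<in>{S \<in> roe. conj_perm \<psi> S \<in> K}. opnorm (T - S) < \<epsilon>"
    have "\<exists>S\<in>K. opnorm (conj_perm \<psi> T - S) < \<epsilon>" if "\<epsilon> > 0" for \<epsilon>
      using approx that by (force simp: conj_perm_diff[symmetric] opnorm_conj_perm[OF p])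
    then show "T \<in> {S \<in> roe. conj_perm \<psi> S \<in> K}"
      using T conj_roe[OF T] K_closed by blast
  qed blast
qed

lemma Ad_perm_op_ideal_generated:
  assumes p: "bij \<psi>"
    and conj_roe: "\<And>T. T \<in> roe \<Longrightarrow> conj_perm \<psi> T \<in> roe"
    and conj_inv_roe: "\<And>T. T \<in> roe \<Longrightarrow> conj_perm (inv \<psi>) T \<in> roe"
    and J: "J \<subseteq> roe" and J': "conj_perm \<psi> ` J \<subseteq> J'"
  shows "Ad (perm_op \<psi>) ` ideal_generated roe J \<subseteq> ideal_generated roe J'"
proof (rule image_subsetI)
  fix T
  assume T: "T \<in> ideal_generated roe J"
  show "Ad (perm_op \<psi>) T \<in> ideal_generated roe J'"
    unfolding ideal_generated_def
  proof (rule InterI)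
    fix K
    assume "K \<in> {I. closed_ideal_in roe I \<and> J' \<subseteq> I}"
    then have "closed_ideal_in roe {S \<in> roe. conj_perm \<psi> S \<in> K}" "J \<subseteq> {S \<in> roe. conj_perm \<psi> S \<in> K}"
      using closed_ideal_in_conj_perm_preimage[OF p conj_roe conj_inv_roe] J J' by auto
    then have "T \<in> {S \<in> roe. conj_perm \<psi> S \<in> K}"
      using T unfolding ideal_generated_def by blast
    then show "Ad (perm_op \<psi>) T \<in> K"
      by (simp add: Ad_perm_op[OF p] roe_BOP)
  qed
qed

theorem proposition2p7:
  fixes f :: "'a::metric_space \<Rightarrow> 'b::metric_space"
    and U :: "'a set set set" and V :: "'b set set set"
  assumes "coarse_ideal_pair U" and "coarse_ideal_pair V"
    and "coarse_equiv_pairs f U V"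
  shows "\<exists>W :: ('a \<times> nat \<Rightarrow> complex) \<Rightarrow> ('b \<times> nat \<Rightarrow> complex).
           isometry W \<and> covers W f
           \<and> Ad W ` ideal_I U \<subseteq> ideal_I V
           \<and> Ad W ` ideal_G U \<subseteq> ideal_G V
           \<and> unitary W"
proof -
  have bgX: "bounded_geometry (UNIV :: 'a set)" and bgY: "bounded_geometry (UNIV :: 'b set)"
    and ce: "coarse_equivalence f" and inv: "invariant V" and fUV: "umap f ` U \<subseteq> V"
    using assms by (simp_all add: coarse_ideal_pair_def coarse_equiv_pairs_def)
  obtain \<psi> :: "'b \<times> nat \<Rightarrow> 'a \<times> nat" and C where p: "bij \<psi>" and C: "C \<ge> 0"
    and close: "\<And>x y. x \<in> block_image \<psi> y \<Longrightarrow> dist y (f x) \<le> C"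
    using coarse_equivalence_close_bij[OF bgX bgY ce] by blast
  note conj_roe = conj_perm_roe_close[OF bgX ce p close]
    and conj_inv_roe = conj_perm_inv_roe_close[OF bgY ce p close]
  have "Ad (perm_op \<psi>) ` ideal_I U \<subseteq> ideal_I V"
    unfolding ideal_I_def
    using conj_perm_generators_close[OF bgX ce p close C inv fUV]
    by (intro Ad_perm_op_ideal_generated[OF p conj_roe conj_inv_roe]) (auto intro: alg_roe_roe)
  moreover have "Ad (perm_op \<psi>) ` ideal_G U \<subseteq> ideal_G V"
    using supported_in_conj_perm_close[OF bgX ce p close C inv fUV]
    by (auto simp: ideal_G_def Ad_perm_op[OF p] roe_BOP conj_roe)
  ultimately show ?thesis
    by (intro exI[of _ "perm_op \<psi>"] conjI isometry_perm_op[OF p] covers_perm_op[OF C close]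
        unitary_perm_op[OF p])
qed

end
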